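(* Let $m,n\ge1$ and let $\mathcal{C}$ be a simplicial complex on ground set $V$ obtained from $D_{m,n}$ (on vertex set $W\subseteq V$) by a finite sequence of operations, each of which is either $\operatorname{cone}^p(\cdot)$, $G(\cdot)$, or $\Lambda(\cdot)$. Call a vertex a Lawrence vertex if it is the new vertex added by one of the Lawrence liftings $\Lambda(\cdot)$ in this sequence. Let $\mathbf{d}=(d_v)_{v\in V}$ with all $d_v\ge 2$. Then $\mathcal{A}_{\mathcal{C},\mathbf{d}}$ is unimodular if and only if $d_v=2$ for every $v\in W$ and $d_v=2$ for every Lawrence vertex $v$.
   Context: A simplicial complex on a finite ground set $V$ is a family of subsets of $V$ closed under taking subsets; facets are inclusion-maximal faces. For $\mathbf{d}=(d_v)_{v\in V}$ with all $d_v\ge2$, $\mathcal{A}_{\mathcal{C},\mathbf{d}}$ is the $0/1$ matrix with columns indexed by $\mathbf{i}\in\prod_{v\in V}[d_v]$ and rows indexed by pairs $(F,\mathbf{e})$, $F$ a facet, $\mathbf{e}\in\prod_{v\in F}[d_v]$; entry $1$ iff $\mathbf{e}=\mathbf{i}|_F$. An integer matrix $A$ is unimodular if every circuit of $A$ (a nonzero integer vector in $\ker A$ with relatively prime entries and inclusion-minimal support among nonzero kernel vectors) has all entries in $\{0,\pm1\}$. $\Delta_k$ is the complex on a $(k+1)$-set with that set as its only facet; $\Delta_m\sqcup\Delta_n$ is the disjoint union; the Alexander dual of $\mathcal{C}$ on $V$ is $\{S\subseteq V: V\setminus S\notin\mathcal{C}\}$, and $D_{m,n}=(\Delta_m\sqcup\Delta_n)^*$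 (on $m+n+2$ vertices; its facets are the sets omitting exactly one vertex of each of the two blocks). $\operatorname{cone}^p(\mathcal{C})$ adds $p$ new vertices $u_1,\dots,u_p$ and has facets $F\cup\{u_1,\dots,u_p\}$; $G(\mathcal{C})$ is $\mathcal{C}$ with one new vertex added to the ground set lying in no face; for $\mathcal{C}$ on $[n]$, $\Lambda(\mathcal{C})$ is the complex on $[n+1]$ with facets $[n]$ and $F\cup\{n+1\}$ for $F$ a facet of $\mathcal{C}$. *)

theory Defs
  imports Main "HOL-Library.FuncSet"
begin

definition facets :: "'a set set \<Rightarrow> 'a set set" where
  "facets C = {F \<in> C. \<forall>G\<in>C. F \<subseteq> G \<longrightarrow> G = F}"

definition alexander_dual :: "'a set \<Rightarrow> 'a set set \<Rightarrow> 'a set set" where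
  "alexander_dual V C = {S. S \<subseteq> V \<and> V - S \<notin> C}"

text \<open>Delta_m disjoint-union Delta_n, realised on blocks A (|A|=m+1) and B (|B|=n+1).\<close>
definition simplex_disj_union :: "'a set \<Rightarrow> 'a set \<Rightarrow> 'a set set" where
  "simplex_disj_union A B = Pow A \<union> Pow B"

definition Dmn :: "'a set \<Rightarrow> 'a set \<Rightarrow> 'a set set" where
  "Dmn A B = alexander_dual (A \<union> B) (simplex_disj_union A B)"

text \<open>cone^p with new vertex set U (|U| = p): facets F \<union> U.\<close>
definition cone_cx :: "'a set \<Rightarrow> 'a set set \<Rightarrow> 'a set set" where
  "cone_cx U C = {S \<union> T | S T. S \<in> C \<and> T \<subseteq> U}"

text \<open>Lawrence lifting of C on ground set V with new vertex u:
  facets V and F \<union> {u} for F a facet of C.\<close>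
definition lawrence_cx :: "'a set \<Rightarrow> 'a \<Rightarrow> 'a set set \<Rightarrow> 'a set set" where
  "lawrence_cx V u C = Pow V \<union> {insert u S | S. S \<in> C}"

text \<open>obtained m n V C W L: the complex C on ground set V is obtained from D_{m,n}
  on vertex set W by a finite sequence of cone^p, G and Lambda operations;
  L is the set of Lawrence vertices of that sequence.\<close>
inductive obtained :: "nat \<Rightarrow> nat \<Rightarrow> 'a set \<Rightarrow> 'a set set \<Rightarrow> 'a set \<Rightarrow> 'a set \<Rightarrow> bool"
  for m n :: nat where
  base: "\<lbrakk> finite A; finite B; A \<inter> B = {}; card A = m + 1; card B = n + 1 \<rbrakk>
         \<Longrightarrow> obtained m n (A \<union> B) (Dmn A B) (A \<union> B) {}"
| cone: "\<lbrakk> obtained m n V C W L; finite U; U \<noteq> {}; U \<inter> V = {} \<rbrakk>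
         \<Longrightarrow> obtained m n (V \<union> U) (cone_cx U C) W L"
| ghost: "\<lbrakk> obtained m n V C W L; u \<notin> V \<rbrakk>
         \<Longrightarrow> obtained m n (insert u V) C W L"
| lawrence: "\<lbrakk> obtained m n V C W L; u \<notin> V \<rbrakk>
         \<Longrightarrow> obtained m n (insert u V) (lawrence_cx V u C) W (insert u L)"

text \<open>An integer matrix given by a row index set R, column index set K and entries M.\<close>
definition in_kernel :: "'r set \<Rightarrow> 'k set \<Rightarrow> ('r \<Rightarrow> 'k \<Rightarrow> int) \<Rightarrow> ('k \<Rightarrow> int) \<Rightarrow> bool" where
  "in_kernel R K M x \<longleftrightarrow> (\<forall>c. c \<notin> K \<longrightarrow> x c = 0) \<and> (\<forall>r\<in>R. (\<Sum>c\<in>K. M r c * x c) = 0)"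

definition supp_vec :: "('k \<Rightarrow> int) \<Rightarrow> 'k set" where
  "supp_vec x = {c. x c \<noteq> 0}"

definition is_circuit :: "'r set \<Rightarrow> 'k set \<Rightarrow> ('r \<Rightarrow> 'k \<Rightarrow> int) \<Rightarrow> ('k \<Rightarrow> int) \<Rightarrow> bool" where
  "is_circuit R K M x \<longleftrightarrow>
     in_kernel R K M x \<and> supp_vec x \<noteq> {} \<and> Gcd (x ` K) = 1 \<and>
     (\<forall>y. in_kernel R K M y \<and> supp_vec y \<noteq> {} \<longrightarrow> \<not> (supp_vec y \<subset> supp_vec x))"

definition unimodular_mat :: "'r set \<Rightarrow> 'k set \<Rightarrow> ('r \<Rightarrow> 'k \<Rightarrow> int) \<Rightarrow> bool" where
  "unimodular_mat R K M \<longleftrightarrow> (\<forall>x. is_circuit R K M x \<longrightarrow> (\<forall>c\<in>K. x c \<in> {-1, 0, 1}))"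

definition cols_A :: "'a set \<Rightarrow> ('a \<Rightarrow> nat) \<Rightarrow> ('a \<Rightarrow> nat) set" where
  "cols_A V d = PiE V (\<lambda>v. {1..d v})"

definition rows_A :: "'a set set \<Rightarrow> ('a \<Rightarrow> nat) \<Rightarrow> ('a set \<times> ('a \<Rightarrow> nat)) set" where
  "rows_A C d = {(F, e). F \<in> facets C \<and> e \<in> PiE F (\<lambda>v. {1..d v})}"

definition entry_A :: "'a set \<times> ('a \<Rightarrow> nat) \<Rightarrow> ('a \<Rightarrow> nat) \<Rightarrow> int" where
  "entry_A r i = (if snd r = restrict i (fst r) then 1 else 0)"

definition A_unimodular :: "'a set \<Rightarrow> 'a set set \<Rightarrow> ('a \<Rightarrow> nat) \<Rightarrow> bool" where
  "A_unimodular V C d = unimodular_mat (rows_A C d) (cols_A V d) entry_A"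

end

theory Submission
  imports Defs
begin

text \<open>\<open>A\<^sub>C\<^sub>,\<^sub>d\<close> is unimodular iff every nonzero kernel vector has a nonzero \<open>{0,\<plusminus>1}\<close> kernel vector
  supported within it, and kernel vectors are those whose marginals on all faces vanish.
  Splitting the columns along the vertices added by an operation, a kernel vector of a cone is
  a family of kernel vectors (its slices), for a vertex outside every face a family whose sum
  is a kernel vector, and for a Lawrence lifting a family of kernel vectors summing to zero.
  This transfers the refinement property in both directions for cones and for vertices outside
  every face, and for a Lawrence lifting with two levels at the new vertex.  With three levels
  at a Lawrence vertex, a kernel vector with slices \<open>x\<close>, \<open>y\<close>, \<open>-(x + y)\<close> has no refinement as
  soon as the complex has two rigid \<open>{0,\<plusminus>1}\<close> kernel vectors \<open>x\<close>, \<open>y\<close> that agree at one entry and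
  are opposite at another; this invariant survives all three operations.  For \<open>D\<^sub>m\<^sub>,\<^sub>n\<close> with two
  levels the kernel vectors are, up to a sign twist, sums of a function of the levels on one
  block and one of the levels on the other, which yields both the refinement property and the
  rigid pair; with three levels at one vertex an explicit kernel vector has no refinement, and
  refinability passes to fewer levels.\<close>

section \<open>Unimodularity and \<open>{0,\<plusminus>1}\<close> kernel vectors\<close>

definition pm1_refinable :: "'r set \<Rightarrow> 'k set \<Rightarrow> ('r \<Rightarrow> 'k \<Rightarrow> int) \<Rightarrow> bool" where
  "pm1_refinable R K M \<longleftrightarrow> (\<forall>z. in_kernel R K M z \<and> supp_vec z \<noteq> {} \<longrightarrow>
     (\<exists>y. in_kernel R K M y \<and> supp_vec y \<noteq> {} \<and> (\<forall>c. y c \<in> {-1,0,1}) \<and> supp_vec y \<subseteq> supp_vec z))"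

lemma in_kernel_lincomb:
  assumes "in_kernel R K M x" "in_kernel R K M y"
  shows "in_kernel R K M (\<lambda>c. a * x c + b * y c)"
proof -
  have "(\<Sum>c\<in>K. M r c * (a * x c + b * y c)) = a * (\<Sum>c\<in>K. M r c * x c) + b * (\<Sum>c\<in>K. M r c * y c)" for r
    by (simp add: sum.distrib sum_distrib_left algebra_simps)
  then show ?thesis using assms unfolding in_kernel_def by auto
qed

lemma supp_vec_subset_if_in_kernel: "in_kernel R K M x \<Longrightarrow> supp_vec x \<subseteq> K"
  unfolding in_kernel_def supp_vec_def by auto

text \<open>A circuit is determined up to scaling by its support: the combination
  \<open>x j \<cdot> y - y j \<cdot> x\<close> lies in the kernel and its support misses \<open>j\<close>.\<close>
lemma circuit_cross_mult:
  assumes circ: "is_circuit R K M x" and ky: "in_kernel R K M y" and sy: "supp_vec y \<subseteq> supp_vec x"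
  shows "x j * y c = y j * x c"
proof (cases "j \<in> supp_vec x")
  case True
  define v where "v = (\<lambda>c. x j * y c + (- y j) * x c)"
  have kx: "in_kernel R K M x" and minimal: "\<And>w. in_kernel R K M w \<Longrightarrow> supp_vec w \<noteq> {} \<Longrightarrow> \<not> supp_vec w \<subset> supp_vec x"
    using circ unfolding is_circuit_def by blast+
  have "in_kernel R K M v" unfolding v_def by (rule in_kernel_lincomb[OF ky kx])
  moreover have "supp_vec v \<subset> supp_vec x"
  proof -
    have "supp_vec v \<subseteq> supp_vec x" using sy unfolding v_def supp_vec_def by auto
    moreover have "j \<notin> supp_vec v" unfolding v_def supp_vec_def by (simp add: mult.commute)
    ultimately show ?thesis using True by blast
  qed
  ultimately have "supp_vec v = {}" using minimal by blast
  then have "v c = 0" unfolding supp_vec_def by blast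
  then show ?thesis unfolding v_def by simp
next
  case False
  then have "x j = 0" "y j = 0" using sy unfolding supp_vec_def by auto
  then show ?thesis by simp
qed

lemma pm1_refinable_imp_unimodular:
  assumes "pm1_refinable R K M"
  shows "unimodular_mat R K M"
  unfolding unimodular_mat_def
proof (intro allI impI ballI)
  fix x c assume circ: "is_circuit R K M x" and "c \<in> K"
  have "in_kernel R K M x" "supp_vec x \<noteq> {}" using circ unfolding is_circuit_def by simp_all
  then obtain y where ky: "in_kernel R K M y" and ny: "supp_vec y \<noteq> {}"
    and y1: "\<forall>c. y c \<in> {-1,0,1}" and sy: "supp_vec y \<subseteq> supp_vec x"
    using assms unfolding pm1_refinable_def by blast
  obtain j where "y j \<noteq> 0" using ny unfolding supp_vec_def by blast
  then have yj: "y j * y j = 1" using y1[rule_format, of j] by auto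
  define k where "k = x j * y j"
  have xk: "x c = k * y c" for c
  proof -
    have "x c = y j * (y j * x c)" using yj by (simp add: mult.assoc[symmetric])
    also have "\<dots> = y j * (x j * y c)" using circuit_cross_mult[OF circ ky sy, of j c] by simp
    finally show ?thesis unfolding k_def by (simp add: mult_ac)
  qed
  have "k dvd Gcd (x ` K)"
  proof (rule Gcd_greatest)
    fix a assume "a \<in> x ` K"
    then show "k dvd a" using xk by auto
  qed
  moreover have "Gcd (x ` K) = 1" using circ unfolding is_circuit_def by blast
  ultimately have "\<bar>k\<bar> = 1" by simp
  then have "k = 1 \<or> k = -1" by linarith
  then show "x c \<in> {-1,0,1}" using xk[of c] y1[rule_format, of c] by auto
qed

lemma primitive_kernel_vector:
  assumes ky: "in_kernel R K M y" and ny: "supp_vec y \<noteq> {}"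
  obtains y' where "in_kernel R K M y'" "supp_vec y' = supp_vec y" "Gcd (y' ` K) = 1"
proof -
  define g where "g = Gcd (y ` K)"
  have yK: "y c = 0" if "c \<notin> K" for c using ky that unfolding in_kernel_def by simp
  have gd: "g dvd y c" for c
  proof (cases "c \<in> K")
    case True then show ?thesis unfolding g_def by (simp add: Gcd_dvd)
  qed (simp add: yK)
  obtain j where "y j \<noteq> 0" using ny unfolding supp_vec_def by blast
  then have g0: "g \<noteq> 0" using gd[of j] by auto
  define y' where "y' = (\<lambda>c. y c div g)"
  have yy': "y c = g * y' c" for c unfolding y'_def using gd by simp
  have "in_kernel R K M y'"
    unfolding in_kernel_def
  proof (intro conjI allI impI ballI)
    fix c assume "c \<notin> K" then show "y' c = 0" using yK yy' g0 by (metis mult_eq_0_iff)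
  next
    fix r assume r: "r \<in> R"
    have "g * (\<Sum>c\<in>K. M r c * y' c) = (\<Sum>c\<in>K. M r c * y c)"
      by (simp add: sum_distrib_left yy' algebra_simps)
    then show "(\<Sum>c\<in>K. M r c * y' c) = 0" using ky r g0 unfolding in_kernel_def by simp
  qed
  moreover have "supp_vec y' = supp_vec y" unfolding supp_vec_def using yy' g0 by simp
  moreover have "Gcd (y' ` K) = 1"
  proof -
    have img: "y ` K = (*) g ` (y' ` K)" using yy' by (simp add: image_image)
    have "Gcd (y ` K) = normalize (g * Gcd (y' ` K))" unfolding img by (simp add: Gcd_mult)
    then have "g = normalize (g * Gcd (y' ` K))" unfolding g_def .
    moreover have "normalize g = g" "g \<ge> 0" "Gcd (y' ` K) \<ge> 0" unfolding g_def by simp_all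
    ultimately have "g * Gcd (y' ` K) = g" by (simp add: abs_mult)
    then show ?thesis using g0 by simp
  qed
  ultimately show ?thesis by (rule that)
qed

lemma unimodular_imp_pm1_refinable:
  assumes fin: "finite K" and U: "unimodular_mat R K M"
  shows "pm1_refinable R K M"
  unfolding pm1_refinable_def
proof (intro allI impI)
  fix z assume "in_kernel R K M z \<and> supp_vec z \<noteq> {}"
  define Q where "Q = (\<lambda>y. in_kernel R K M y \<and> supp_vec y \<noteq> {} \<and> supp_vec y \<subseteq> supp_vec z)"
  have "Q z" using \<open>in_kernel R K M z \<and> supp_vec z \<noteq> {}\<close> unfolding Q_def by simp
  then obtain y where Qy: "Q y" and ymin: "\<And>w. Q w \<Longrightarrow> card (supp_vec y) \<le> card (supp_vec w)"
    using ex_has_least_nat[of Q z "\<lambda>y. card (supp_vec y)"] by blast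
  have ky: "in_kernel R K M y" and ny: "supp_vec y \<noteq> {}" and sy: "supp_vec y \<subseteq> supp_vec z"
    using Qy unfolding Q_def by simp_all
  obtain y' where ky': "in_kernel R K M y'" and supp': "supp_vec y' = supp_vec y"
    and gy': "Gcd (y' ` K) = 1"
    using primitive_kernel_vector[OF ky ny] by blast
  have fy: "finite (supp_vec y)" using supp_vec_subset_if_in_kernel[OF ky] fin finite_subset by blast
  have minimal: "\<not> supp_vec w \<subset> supp_vec y'" if w: "in_kernel R K M w" "supp_vec w \<noteq> {}" for w
  proof
    assume ss: "supp_vec w \<subset> supp_vec y'"
    then have "Q w" unfolding Q_def using w supp' sy by blast
    then have "card (supp_vec y) \<le> card (supp_vec w)" by (rule ymin)
    moreover have "card (supp_vec w) < card (supp_vec y)" using ss supp' fy by (simp add: psubset_card_mono)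
    ultimately show False by simp
  qed
  have circ: "is_circuit R K M y'"
    unfolding is_circuit_def using ky' supp' ny gy' minimal by simp
  have "y' c \<in> {-1,0,1}" for c
  proof (cases "c \<in> K")
    case True then show ?thesis using U circ unfolding unimodular_mat_def by blast
  next
    case False then show ?thesis using ky' unfolding in_kernel_def by simp
  qed
  then show "\<exists>y. in_kernel R K M y \<and> supp_vec y \<noteq> {} \<and> (\<forall>c. y c \<in> {-1,0,1}) \<and> supp_vec y \<subseteq> supp_vec z"
    using ky' supp' ny sy by blast
qed

lemma unimodular_iff_pm1_refinable: "finite K \<Longrightarrow> unimodular_mat R K M \<longleftrightarrow> pm1_refinable R K M"
  using pm1_refinable_imp_unimodular unimodular_imp_pm1_refinable by blast

section \<open>Kernel vectors of \<open>A\<^sub>C\<^sub>,\<^sub>d\<close>\<close>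

definition marginal :: "'a set \<Rightarrow> ('a \<Rightarrow> nat) \<Rightarrow> 'a set \<Rightarrow> ('a \<Rightarrow> nat) \<Rightarrow> (('a \<Rightarrow> nat) \<Rightarrow> int) \<Rightarrow> int" where
  "marginal V d S e z = (\<Sum>i\<in>cols_A V d. if restrict i S = e then z i else 0)"

text \<open>Kernel membership is stated for all faces, not only facets; the two agree
  because marginals over a face are sums of marginals over a facet containing it.\<close>
definition A_kernel :: "'a set \<Rightarrow> 'a set set \<Rightarrow> ('a \<Rightarrow> nat) \<Rightarrow> (('a \<Rightarrow> nat) \<Rightarrow> int) \<Rightarrow> bool" where
  "A_kernel V C d z \<longleftrightarrow> (\<forall>i. i \<notin> cols_A V d \<longrightarrow> z i = 0) \<and>
     (\<forall>S\<in>C. \<forall>e\<in>PiE S (\<lambda>v. {1..d v}). marginal V d S e z = 0)"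

abbreviation supp_within :: "('k \<Rightarrow> int) \<Rightarrow> ('k \<Rightarrow> int) \<Rightarrow> bool" where
  "supp_within y z \<equiv> \<forall>i. y i \<noteq> 0 \<longrightarrow> z i \<noteq> 0"

abbreviation pm1_refinement :: "'a set \<Rightarrow> 'a set set \<Rightarrow> ('a \<Rightarrow> nat) \<Rightarrow> (('a \<Rightarrow> nat) \<Rightarrow> int) \<Rightarrow> (('a \<Rightarrow> nat) \<Rightarrow> int) \<Rightarrow> bool" where
  "pm1_refinement V C d y z \<equiv> A_kernel V C d y \<and> (\<exists>i. y i \<noteq> 0) \<and> (\<forall>i. y i \<in> {-1,0,1}) \<and> supp_within y z"

definition A_pm1_refinable :: "'a set \<Rightarrow> 'a set set \<Rightarrow> ('a \<Rightarrow> nat) \<Rightarrow> bool" where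
  "A_pm1_refinable V C d \<longleftrightarrow> (\<forall>z. A_kernel V C d z \<and> (\<exists>i. z i \<noteq> 0) \<longrightarrow> (\<exists>y. pm1_refinement V C d y z))"

lemma A_pm1_refinableD:
  "A_pm1_refinable V C d \<Longrightarrow> A_kernel V C d z \<Longrightarrow> z i \<noteq> 0 \<Longrightarrow> \<exists>y. pm1_refinement V C d y z"
  unfolding A_pm1_refinable_def by blast

lemma A_pm1_refinableI:
  "(\<And>z i. A_kernel V C d z \<Longrightarrow> z i \<noteq> 0 \<Longrightarrow> \<exists>y. pm1_refinement V C d y z) \<Longrightarrow> A_pm1_refinable V C d"
  unfolding A_pm1_refinable_def by blast

lemma finite_cols_A: "finite V \<Longrightarrow> finite (cols_A V d)"
  unfolding cols_A_def by (rule finite_PiE) auto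

lemma A_kernel_outside: "A_kernel V C d z \<Longrightarrow> i \<notin> cols_A V d \<Longrightarrow> z i = 0"
  unfolding A_kernel_def by simp

lemma marginal_lincomb:
  "marginal V d S e (\<lambda>i. a * x i + b * y i) = a * marginal V d S e x + b * marginal V d S e y"
proof -
  have "marginal V d S e (\<lambda>i. a * x i + b * y i) =
    (\<Sum>i\<in>cols_A V d. a * (if restrict i S = e then x i else 0) + b * (if restrict i S = e then y i else 0))"
    unfolding marginal_def by (intro sum.cong refl) simp
  then show ?thesis unfolding marginal_def by (simp add: sum.distrib sum_distrib_left)
qed

lemma A_kernel_lincomb:
  "A_kernel V C d x \<Longrightarrow> A_kernel V C d y \<Longrightarrow> A_kernel V C d (\<lambda>i. a * x i + b * y i)"
  unfolding A_kernel_def by (simp add: marginal_lincomb)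

lemma A_kernel_zero: "A_kernel V C d (\<lambda>i. 0)"
  unfolding A_kernel_def marginal_def by simp

lemma A_kernel_scale: "A_kernel V C d x \<Longrightarrow> A_kernel V C d (\<lambda>i. a * x i)"
  using A_kernel_lincomb[of V C d x x a 0] by simp

lemma A_kernel_Un: "A_kernel V (C1 \<union> C2) d z \<longleftrightarrow> A_kernel V C1 d z \<and> A_kernel V C2 d z"
  unfolding A_kernel_def by blast

lemma face_subset_facet:
  assumes "finite C" "S \<in> C"
  obtains F where "F \<in> facets C" "S \<subseteq> F"
proof -
  obtain F where "F \<in> C" "S \<subseteq> F" "\<forall>G\<in>C. F \<subseteq> G \<longrightarrow> F = G"
    using finite_has_maximal2[OF assms] by blast
  moreover from this have "F \<in> facets C" unfolding facets_def by blast
  ultimately show ?thesis using that by blast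
qed

lemma marginal_via_superface:
  assumes fV: "finite V" and SF: "S \<subseteq> F" and FV: "F \<subseteq> V"
  shows "marginal V d S e z = (\<Sum>e'\<in>PiE F (\<lambda>v. {1..d v}). if restrict e' S = e then marginal V d F e' z else 0)"
proof -
  have fF: "finite (PiE F (\<lambda>v. {1..d v}))" using fV FV finite_subset by (intro finite_PiE) auto
  have "(\<Sum>e'\<in>PiE F (\<lambda>v. {1..d v}). if restrict e' S = e then marginal V d F e' z else 0)
      = (\<Sum>e'\<in>PiE F (\<lambda>v. {1..d v}). \<Sum>i\<in>cols_A V d. if restrict i F = e' then (if restrict e' S = e then z i else 0) else 0)"
  proof (intro sum.cong refl)
    fix e'
    show "(if restrict e' S = e then marginal V d F e' z else 0) =
        (\<Sum>i\<in>cols_A V d. if restrict i F = e' then (if restrict e' S = e then z i else 0) else 0)"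
    proof -
      have "(if P then marginal V d F e' z else 0) =
          (\<Sum>i\<in>cols_A V d. if restrict i F = e' then (if P then z i else 0) else 0)" for P
        unfolding marginal_def by (cases P) (auto intro!: sum.cong sum.neutral)
      then show ?thesis .
    qed
  qed
  also have "\<dots> = (\<Sum>i\<in>cols_A V d. \<Sum>e'\<in>PiE F (\<lambda>v. {1..d v}). if restrict i F = e' then (if restrict e' S = e then z i else 0) else 0)"
    by (rule sum.swap)
  also have "\<dots> = (\<Sum>i\<in>cols_A V d. if restrict i S = e then z i else 0)"
  proof (intro sum.cong refl)
    fix i assume "i \<in> cols_A V d"
    then have "restrict i F \<in> PiE F (\<lambda>v. {1..d v})" using FV unfolding cols_A_def by auto
    then show "(\<Sum>e'\<in>PiE F (\<lambda>v. {1..d v}). if restrict i F = e' then (if restrict e' S = e then z i else 0) else 0)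
        = (if restrict i S = e then z i else 0)"
      using fF SF by (simp add: Int_absorb1)
  qed
  finally show ?thesis unfolding marginal_def by simp
qed

lemma sum_entry_A: "(\<Sum>c\<in>cols_A V d. entry_A (F, e) c * z c) = marginal V d F e z"
  unfolding marginal_def entry_A_def by (intro sum.cong refl) auto

lemma in_kernel_A_iff:
  assumes fV: "finite V" and CV: "C \<subseteq> Pow V"
  shows "in_kernel (rows_A C d) (cols_A V d) entry_A z \<longleftrightarrow> A_kernel V C d z"
proof
  assume H: "in_kernel (rows_A C d) (cols_A V d) entry_A z"
  have facet: "marginal V d F e z = 0" if "F \<in> facets C" "e \<in> PiE F (\<lambda>v. {1..d v})" for F e
  proof -
    have "(F, e) \<in> rows_A C d" using that unfolding rows_A_def by simp
    then have "(\<Sum>c\<in>cols_A V d. entry_A (F, e) c * z c) = 0" using H unfolding in_kernel_def by blast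
    then show ?thesis by (simp add: sum_entry_A)
  qed
  have fC: "finite C" using CV fV by (meson finite_Pow_iff finite_subset)
  have "marginal V d S e z = 0" if S: "S \<in> C" for S e
  proof -
    obtain F where F: "F \<in> facets C" "S \<subseteq> F" using face_subset_facet[OF fC S] .
    then have "F \<subseteq> V" using CV unfolding facets_def by auto
    then show ?thesis
      unfolding marginal_via_superface[OF fV F(2) \<open>F \<subseteq> V\<close>] using facet[OF F(1)] by (intro sum.neutral) simp
  qed
  then show "A_kernel V C d z" using H unfolding A_kernel_def in_kernel_def by simp
next
  assume K: "A_kernel V C d z"
  show "in_kernel (rows_A C d) (cols_A V d) entry_A z"
    unfolding in_kernel_def
  proof (intro conjI allI impI ballI)
    fix c assume "c \<notin> cols_A V d" then show "z c = 0" by (rule A_kernel_outside[OF K])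
  next
    fix r assume "r \<in> rows_A C d"
    then obtain F e where "r = (F, e)" "F \<in> C" "e \<in> PiE F (\<lambda>v. {1..d v})"
      unfolding rows_A_def facets_def by blast
    then show "(\<Sum>c\<in>cols_A V d. entry_A r c * z c) = 0" using K unfolding A_kernel_def by (simp add: sum_entry_A)
  qed
qed

lemma A_unimodular_iff_pm1_refinable:
  assumes "finite V" "C \<subseteq> Pow V"
  shows "A_unimodular V C d \<longleftrightarrow> A_pm1_refinable V C d"
proof -
  have "A_unimodular V C d \<longleftrightarrow> pm1_refinable (rows_A C d) (cols_A V d) entry_A"
    unfolding A_unimodular_def using finite_cols_A[OF assms(1)] by (rule unimodular_iff_pm1_refinable)
  also have "\<dots> \<longleftrightarrow> A_pm1_refinable V C d"
    unfolding pm1_refinable_def A_pm1_refinable_def in_kernel_A_iff[OF assms] supp_vec_def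
    by (simp add: subset_iff)
  finally show ?thesis .
qed

section \<open>Slices along a split of the vertex set\<close>

abbreviation glue :: "'a set \<Rightarrow> ('a \<Rightarrow> nat) \<Rightarrow> ('a \<Rightarrow> nat) \<Rightarrow> ('a \<Rightarrow> nat)" where
  "glue V j t \<equiv> override_on t j V"

lemma glue_in_cols_A: "j \<in> cols_A V d \<Longrightarrow> t \<in> cols_A U d \<Longrightarrow> glue V j t \<in> cols_A (V \<union> U) d"
  unfolding cols_A_def override_on_def by (auto simp: PiE_def extensional_def Pi_def)

lemma restrict_glue_left: "j \<in> cols_A V d \<Longrightarrow> restrict (glue V j t) V = j"
  unfolding cols_A_def override_on_def by (auto simp: fun_eq_iff PiE_def extensional_def)

lemma restrict_glue_right: "V \<inter> U = {} \<Longrightarrow> t \<in> cols_A U d \<Longrightarrow> restrict (glue V j t) U = t"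
  unfolding cols_A_def override_on_def by (auto simp: fun_eq_iff PiE_def extensional_def)

lemma restrict_in_cols_A: "i \<in> cols_A W d \<Longrightarrow> X \<subseteq> W \<Longrightarrow> restrict i X \<in> cols_A X d"
  unfolding cols_A_def by auto

lemma restrict_cols_A_self: "t \<in> cols_A X d \<Longrightarrow> restrict t X = t"
  unfolding cols_A_def by (auto simp: fun_eq_iff PiE_def extensional_def)

lemma glue_restrict: "i \<in> cols_A (V \<union> U) d \<Longrightarrow> glue V (restrict i V) (restrict i U) = i"
  unfolding cols_A_def override_on_def by (auto simp: fun_eq_iff PiE_def extensional_def)

lemma update_in_cols_A: "i \<in> cols_A V d \<Longrightarrow> a \<in> V \<Longrightarrow> p \<in> {1..d a} \<Longrightarrow> i(a := p) \<in> cols_A V d"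
  unfolding cols_A_def by (auto simp: PiE_def Pi_def extensional_def)

lemma cols_A_cong: "\<forall>v\<in>V. d v = d' v \<Longrightarrow> cols_A V d = cols_A V d'"
  unfolding cols_A_def by (rule PiE_cong) auto

lemma cols_A_nonempty: "\<forall>u\<in>U. d u \<ge> 1 \<Longrightarrow> cols_A U d \<noteq> {}"
  unfolding cols_A_def by (auto simp: PiE_eq_empty_iff)

lemma bij_betw_glue:
  assumes "V \<inter> U = {}"
  shows "bij_betw (\<lambda>(j, t). glue V j t) (cols_A V d \<times> cols_A U d) (cols_A (V \<union> U) d)"
proof (rule bij_betw_byWitness[where f' = "\<lambda>i. (restrict i V, restrict i U)"])
  show "\<forall>x\<in>cols_A V d \<times> cols_A U d. (\<lambda>i. (restrict i V, restrict i U)) ((\<lambda>(j, t). glue V j t) x) = x"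
    using restrict_glue_left restrict_glue_right[OF assms] by auto
  show "\<forall>i\<in>cols_A (V \<union> U) d. (\<lambda>(j, t). glue V j t) (restrict i V, restrict i U) = i"
    using glue_restrict by auto
  show "(\<lambda>(j, t). glue V j t) ` (cols_A V d \<times> cols_A U d) \<subseteq> cols_A (V \<union> U) d"
    using glue_in_cols_A by auto
  show "(\<lambda>i. (restrict i V, restrict i U)) ` cols_A (V \<union> U) d \<subseteq> cols_A V d \<times> cols_A U d"
    using restrict_in_cols_A by blast
qed

lemma sum_cols_A_Un:
  assumes "V \<inter> U = {}"
  shows "(\<Sum>i\<in>cols_A (V \<union> U) d. f i) = (\<Sum>t\<in>cols_A U d. \<Sum>j\<in>cols_A V d. f (glue V j t))"
proof -
  have "(\<Sum>i\<in>cols_A (V \<union> U) d. f i) = (\<Sum>(j, t)\<in>cols_A V d \<times> cols_A U d. f (glue V j t))"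
    using sum.reindex_bij_betw[OF bij_betw_glue[OF assms], of f] by (simp add: case_prod_beta')
  also have "\<dots> = (\<Sum>j\<in>cols_A V d. \<Sum>t\<in>cols_A U d. f (glue V j t))"
    by (simp add: sum.cartesian_product)
  finally show ?thesis by (simp add: sum.swap[of _ "cols_A V d"])
qed

lemma restrict_glue_eq_iff:
  assumes "V \<inter> U = {}" "S \<subseteq> V" "T \<subseteq> U" "e \<in> PiE (S \<union> T) D"
  shows "restrict (glue V j t) (S \<union> T) = e \<longleftrightarrow> restrict j S = restrict e S \<and> restrict t T = restrict e T"
proof -
  have e_out: "e x = undefined" if "x \<notin> S \<union> T" for x using assms(4) that by (auto simp: PiE_def extensional_def)
  have "restrict (glue V j t) (S \<union> T) = e \<longleftrightarrow> (\<forall>x\<in>S. j x = e x) \<and> (\<forall>x\<in>T. t x = e x)"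
    using assms(1-3) e_out by (auto simp: fun_eq_iff override_on_def restrict_def)
  also have "\<dots> \<longleftrightarrow> restrict j S = restrict e S \<and> restrict t T = restrict e T"
    by (auto simp: fun_eq_iff restrict_def)
  finally show ?thesis .
qed

lemma marginal_sum:
  "marginal V d S e (\<lambda>j. \<Sum>t\<in>X. f t j) = (\<Sum>t\<in>X. marginal V d S e (f t))"
proof -
  have "marginal V d S e (\<lambda>j. \<Sum>t\<in>X. f t j) = (\<Sum>i\<in>cols_A V d. \<Sum>t\<in>X. if restrict i S = e then f t i else 0)"
    unfolding marginal_def by (intro sum.cong refl) simp
  also have "\<dots> = (\<Sum>t\<in>X. marginal V d S e (f t))" unfolding marginal_def by (rule sum.swap)
  finally show ?thesis .
qed

lemma marginal_Un:
  assumes disj: "V \<inter> U = {}" and SV: "S \<subseteq> V" and TU: "T \<subseteq> U" and e: "e \<in> PiE (S \<union> T) D"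
  shows "marginal (V \<union> U) d (S \<union> T) e z =
     (\<Sum>t\<in>cols_A U d. if restrict t T = restrict e T
        then marginal V d S (restrict e S) (\<lambda>j. if j \<in> cols_A V d then z (glue V j t) else 0) else 0)"
  unfolding marginal_def sum_cols_A_Un[OF disj] restrict_glue_eq_iff[OF disj SV TU e]
  by (intro sum.cong refl) (auto intro!: sum.cong)

definition slice :: "'a set \<Rightarrow> ('a \<Rightarrow> nat) \<Rightarrow> (('a \<Rightarrow> nat) \<Rightarrow> int) \<Rightarrow> ('a \<Rightarrow> nat) \<Rightarrow> ('a \<Rightarrow> nat) \<Rightarrow> int" where
  "slice V d z t = (\<lambda>j. if j \<in> cols_A V d then z (glue V j t) else 0)"

definition unslice :: "'a set \<Rightarrow> 'a set \<Rightarrow> ('a \<Rightarrow> nat) \<Rightarrow> (('a \<Rightarrow> nat) \<Rightarrow> ('a \<Rightarrow> nat) \<Rightarrow> int) \<Rightarrow> ('a \<Rightarrow> nat) \<Rightarrow> int" where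
  "unslice V U d F = (\<lambda>i. if i \<in> cols_A (V \<union> U) d then F (restrict i U) (restrict i V) else 0)"

definition slice_lift :: "'a set \<Rightarrow> 'a set \<Rightarrow> ('a \<Rightarrow> nat) \<Rightarrow> (('a \<Rightarrow> nat) \<Rightarrow> int) \<Rightarrow> (('a \<Rightarrow> nat) \<Rightarrow> int) \<Rightarrow> ('a \<Rightarrow> nat) \<Rightarrow> int" where
  "slice_lift V U d c y = unslice V U d (\<lambda>t j. c t * y j)"

lemma slice_outside: "j \<notin> cols_A V d \<Longrightarrow> slice V d z t j = 0"
  unfolding slice_def by simp

lemma slice_nonzeroD: "slice V d z t j \<noteq> 0 \<Longrightarrow> j \<in> cols_A V d \<and> z (glue V j t) \<noteq> 0"
  unfolding slice_def by (simp split: if_splits)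

lemma slice_lincomb: "slice V d (\<lambda>i. a * f i + b * g i) t j = a * slice V d f t j + b * slice V d g t j"
  unfolding slice_def by simp

lemma slice_supp_within: "supp_within y z \<Longrightarrow> supp_within (slice V d y t) (slice V d z t)"
  unfolding slice_def by simp

lemma slice_pm1: "\<forall>i. y i \<in> {-1,0,1} \<Longrightarrow> slice V d y t j \<in> {-1,0,1}"
  unfolding slice_def by simp

locale vertex_split =
  fixes V U :: "'a set" and d :: "'a \<Rightarrow> nat"
  assumes disjoint: "V \<inter> U = {}" and finite_V: "finite V" and finite_U: "finite U"
begin

lemma marginal_face_Un:
  assumes SV: "S \<subseteq> V" and e: "e \<in> PiE (S \<union> U) (\<lambda>v. {1..d v})"
  shows "marginal (V \<union> U) d (S \<union> U) e z = marginal V d S (restrict e S) (slice V d z (restrict e U))"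
proof -
  have eU: "restrict e U \<in> cols_A U d" using e unfolding cols_A_def by auto
  have "marginal (V \<union> U) d (S \<union> U) e z =
     (\<Sum>t\<in>cols_A U d. if restrict t U = restrict e U then marginal V d S (restrict e S) (slice V d z t) else 0)"
    unfolding marginal_Un[OF disjoint SV subset_refl e] slice_def ..
  also have "\<dots> = (\<Sum>t\<in>cols_A U d. if t = restrict e U then marginal V d S (restrict e S) (slice V d z t) else 0)"
    by (intro sum.cong refl) (simp add: restrict_cols_A_self)
  also have "\<dots> = marginal V d S (restrict e S) (slice V d z (restrict e U))"
    using eU finite_cols_A[OF finite_U] by simp
  finally show ?thesis .
qed

lemma marginal_face_left:
  assumes SV: "S \<subseteq> V" and e: "e \<in> PiE S (\<lambda>v. {1..d v})"
  shows "marginal (V \<union> U) d S e z = marginal V d S e (\<lambda>j. \<Sum>t\<in>cols_A U d. slice V d z t j)"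
proof -
  have e': "e \<in> PiE (S \<union> {}) (\<lambda>v. {1..d v})" using e by simp
  have "restrict e S = e" using e by (auto simp: fun_eq_iff PiE_def extensional_def)
  then have "marginal (V \<union> U) d (S \<union> {}) e z = (\<Sum>t\<in>cols_A U d. marginal V d S e (slice V d z t))"
    unfolding marginal_Un[OF disjoint SV empty_subsetI e'] slice_def by (simp add: restrict_def)
  then show ?thesis by (simp add: marginal_sum)
qed

lemma glue_PiE:
  assumes SV: "S \<subseteq> V" and e: "e \<in> PiE S (\<lambda>v. {1..d v})" and t: "t \<in> cols_A U d"
  shows "glue S e t \<in> PiE (S \<union> U) (\<lambda>v. {1..d v})" "restrict (glue S e t) S = e" "restrict (glue S e t) U = t"
proof -
  show "glue S e t \<in> PiE (S \<union> U) (\<lambda>v. {1..d v})"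
    using e t unfolding override_on_def cols_A_def by (auto simp: PiE_def extensional_def Pi_def)
  show "restrict (glue S e t) S = e" using e by (rule restrict_glue_left[unfolded cols_A_def])
  show "restrict (glue S e t) U = t" using SV disjoint t by (intro restrict_glue_right) auto
qed

lemma marginal_slice_eq:
  assumes SV: "S \<subseteq> V" and e: "e \<in> PiE S (\<lambda>v. {1..d v})" and t: "t \<in> cols_A U d"
  shows "marginal V d S e (slice V d z t) = marginal (V \<union> U) d (S \<union> U) (glue S e t) z"
  using marginal_face_Un[OF SV glue_PiE(1)[OF SV e t]] glue_PiE(2,3)[OF SV e t] by simp

lemma A_kernel_cone:
  assumes CV: "C \<subseteq> Pow V"
  shows "A_kernel (V \<union> U) (cone_cx U C) d z \<longleftrightarrow>
    (\<forall>i. i \<notin> cols_A (V \<union> U) d \<longrightarrow> z i = 0) \<and> (\<forall>t\<in>cols_A U d. A_kernel V C d (slice V d z t))"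
proof (intro iffI conjI ballI)
  assume K: "A_kernel (V \<union> U) (cone_cx U C) d z"
  then show "\<forall>i. i \<notin> cols_A (V \<union> U) d \<longrightarrow> z i = 0" unfolding A_kernel_def by blast
  fix t assume t: "t \<in> cols_A U d"
  show "A_kernel V C d (slice V d z t)"
    unfolding A_kernel_def
  proof (intro conjI allI impI ballI)
    fix S e assume S: "S \<in> C" and e: "e \<in> PiE S (\<lambda>v. {1..d v})"
    have SV: "S \<subseteq> V" using S CV by blast
    have "S \<union> U \<in> cone_cx U C" unfolding cone_cx_def using S by blast
    then show "marginal V d S e (slice V d z t) = 0"
      using K glue_PiE(1)[OF SV e t] unfolding marginal_slice_eq[OF SV e t] A_kernel_def by blast
  qed (rule slice_outside)
next
  assume H: "(\<forall>i. i \<notin> cols_A (V \<union> U) d \<longrightarrow> z i = 0) \<and> (\<forall>t\<in>cols_A U d. A_kernel V C d (slice V d z t))"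
  show "A_kernel (V \<union> U) (cone_cx U C) d z"
    unfolding A_kernel_def
  proof (intro conjI allI impI ballI)
    fix F e assume F: "F \<in> cone_cx U C" and e: "e \<in> PiE F (\<lambda>v. {1..d v})"
    obtain S T where ST: "F = S \<union> T" "S \<in> C" "T \<subseteq> U" using F unfolding cone_cx_def by blast
    have SV: "S \<subseteq> V" using ST CV by blast
    have e': "e \<in> PiE (S \<union> T) (\<lambda>v. {1..d v})" using e ST by simp
    have eS: "restrict e S \<in> PiE S (\<lambda>v. {1..d v})" using e' by auto
    have "marginal V d S (restrict e S) (slice V d z t) = 0" if "t \<in> cols_A U d" for t
      using H that ST(2) eS unfolding A_kernel_def by blast
    then show "marginal (V \<union> U) d F e z = 0"
      unfolding ST(1) marginal_Un[OF disjoint SV ST(3) e'] slice_def[symmetric] by (intro sum.neutral) simp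
  qed (use H in blast)
qed

end

lemma marginal_full:
  assumes "finite V"
  shows "marginal V d V e w = (if e \<in> cols_A V d then w e else 0)"
proof -
  have "marginal V d V e w = (\<Sum>i\<in>cols_A V d. if i = e then w i else 0)"
    unfolding marginal_def by (intro sum.cong refl) (simp add: restrict_cols_A_self)
  then show ?thesis using finite_cols_A[OF assms] by simp
qed

lemma A_kernel_Pow_iff:
  assumes "finite V"
  shows "A_kernel V (Pow V) d s \<longleftrightarrow> (\<forall>j. s j = 0)"
proof
  assume K: "A_kernel V (Pow V) d s"
  show "\<forall>j. s j = 0"
  proof
    fix j show "s j = 0"
    proof (cases "j \<in> cols_A V d")
      case True
      then have "marginal V d V j s = 0" using K unfolding A_kernel_def cols_A_def by blast
      then show ?thesis using True by (simp add: marginal_full[OF assms])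
    qed (rule A_kernel_outside[OF K])
  qed
next
  assume "\<forall>j. s j = 0"
  then have "s = (\<lambda>j. 0)" by auto
  then show "A_kernel V (Pow V) d s" by (simp add: A_kernel_zero)
qed

lemma lawrence_cx_eq_Un_cone:
  assumes "C \<subseteq> Pow V"
  shows "lawrence_cx V u C = Pow V \<union> cone_cx {u} C"
proof -
  have "cone_cx {u} C = C \<union> {insert u S |S. S \<in> C}"
    unfolding cone_cx_def by (auto simp: subset_singleton_iff)
  then show ?thesis unfolding lawrence_cx_def using assms by blast
qed

context vertex_split begin

lemma A_kernel_ghost:
  assumes CV: "C \<subseteq> Pow V"
  shows "A_kernel (V \<union> U) C d z \<longleftrightarrow>
    (\<forall>i. i \<notin> cols_A (V \<union> U) d \<longrightarrow> z i = 0) \<and> A_kernel V C d (\<lambda>j. \<Sum>t\<in>cols_A U d. slice V d z t j)"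
proof -
  have "marginal (V \<union> U) d S e z = marginal V d S e (\<lambda>j. \<Sum>t\<in>cols_A U d. slice V d z t j)"
    if "S \<in> C" "e \<in> PiE S (\<lambda>v. {1..d v})" for S e
    using that CV by (intro marginal_face_left) auto
  moreover have "\<forall>j. j \<notin> cols_A V d \<longrightarrow> (\<Sum>t\<in>cols_A U d. slice V d z t j) = 0"
    by (simp add: slice_outside)
  ultimately show ?thesis unfolding A_kernel_def by auto
qed

lemma A_kernel_lawrence:
  assumes CV: "C \<subseteq> Pow V" and Uu: "U = {u}"
  shows "A_kernel (V \<union> U) (lawrence_cx V u C) d z \<longleftrightarrow>
    (\<forall>i. i \<notin> cols_A (V \<union> U) d \<longrightarrow> z i = 0) \<and> (\<forall>j. (\<Sum>t\<in>cols_A U d. slice V d z t j) = 0) \<and>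
    (\<forall>t\<in>cols_A U d. A_kernel V C d (slice V d z t))"
  unfolding lawrence_cx_eq_Un_cone[OF CV] A_kernel_Un Uu[symmetric]
    A_kernel_ghost[OF order_refl] A_kernel_cone[OF CV] A_kernel_Pow_iff[OF finite_V]
  by blast

end

section \<open>Rigid vectors and lifted slices\<close>

definition rigid :: "'a set \<Rightarrow> 'a set set \<Rightarrow> ('a \<Rightarrow> nat) \<Rightarrow> (('a \<Rightarrow> nat) \<Rightarrow> int) \<Rightarrow> bool" where
  "rigid V C d x \<longleftrightarrow> (\<forall>w. A_kernel V C d w \<and> supp_within w x \<longrightarrow> (\<exists>c. \<forall>i. w i = c * x i))"

text \<open>The invariant carried along the construction; it is what rules out Lawrence liftings at
  vertices with more than two levels.\<close>
definition rigid_pair :: "'a set \<Rightarrow> 'a set set \<Rightarrow> ('a \<Rightarrow> nat) \<Rightarrow> bool" where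
  "rigid_pair V C d \<longleftrightarrow> (\<exists>x y. A_kernel V C d x \<and> A_kernel V C d y \<and> rigid V C d x \<and> rigid V C d y \<and>
     (\<forall>i. x i \<in> {-1,0,1}) \<and> (\<forall>i. y i \<in> {-1,0,1}) \<and>
     (\<exists>j. x j = y j \<and> x j \<noteq> 0) \<and> (\<exists>k. x k = - y k \<and> x k \<noteq> 0))"

lemma rigidD: "rigid V C d x \<Longrightarrow> A_kernel V C d w \<Longrightarrow> supp_within w x \<Longrightarrow> \<exists>c. \<forall>i. w i = c * x i"
  unfolding rigid_def by blast

context vertex_split begin

lemma slice_unslice:
  assumes "t \<in> cols_A U d"
  shows "slice V d (unslice V U d F) t j = (if j \<in> cols_A V d then F t j else 0)"
  using assms glue_in_cols_A[of j V d t U] restrict_glue_left[of j V d t] restrict_glue_right[OF disjoint, of t d j]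
  unfolding slice_def unslice_def by simp

lemma unslice_outside: "i \<notin> cols_A (V \<union> U) d \<Longrightarrow> unslice V U d F i = 0"
  unfolding unslice_def by simp

lemma unslice_slice:
  assumes "\<forall>i. i \<notin> cols_A (V \<union> U) d \<longrightarrow> z i = 0"
  shows "unslice V U d (slice V d z) = z"
proof
  fix i show "unslice V U d (slice V d z) i = z i"
    using assms restrict_in_cols_A[of i "V \<union> U" d V] glue_restrict[of i V U d]
    unfolding unslice_def slice_def by auto
qed

lemma eq_if_slices_eq:
  assumes "\<forall>i. i \<notin> cols_A (V \<union> U) d \<longrightarrow> z i = 0" "\<forall>i. i \<notin> cols_A (V \<union> U) d \<longrightarrow> w i = 0"
    and "\<forall>t\<in>cols_A U d. slice V d z t = slice V d w t"
  shows "z = w"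
proof -
  have "unslice V U d (slice V d z) = unslice V U d (slice V d w)"
    using assms(3) restrict_in_cols_A[of _ "V \<union> U" d U] unfolding unslice_def by (auto simp: fun_eq_iff)
  then show ?thesis using unslice_slice assms(1,2) by simp
qed

lemma nonzero_slice:
  assumes "\<forall>i. i \<notin> cols_A (V \<union> U) d \<longrightarrow> z i = 0" "z i \<noteq> 0"
  obtains t j where "t \<in> cols_A U d" "slice V d z t j \<noteq> 0"
proof -
  have i: "i \<in> cols_A (V \<union> U) d" using assms by blast
  then have "slice V d z (restrict i U) (restrict i V) = z i"
    using fun_cong[OF unslice_slice[OF assms(1)], of i] unfolding unslice_def by simp
  then show ?thesis using that[OF restrict_in_cols_A[OF i Un_upper2], of "restrict i V"] assms(2) by simp
qed

lemma supp_within_if_slices: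
  assumes "\<forall>i. i \<notin> cols_A (V \<union> U) d \<longrightarrow> y i = 0"
    and "\<forall>t\<in>cols_A U d. supp_within (slice V d y t) (slice V d z t)"
  shows "supp_within y z"
proof (intro allI impI)
  fix i assume "y i \<noteq> 0"
  then have i: "i \<in> cols_A (V \<union> U) d" using assms(1) by blast
  have "glue V (restrict i V) (restrict i U) = i" by (rule glue_restrict[OF i])
  then show "z i \<noteq> 0"
    using assms(2) \<open>y i \<noteq> 0\<close> restrict_in_cols_A[OF i Un_upper2] restrict_in_cols_A[OF i Un_upper1]
    unfolding slice_def by metis
qed

lemma slice_slice_lift:
  "t \<in> cols_A U d \<Longrightarrow> slice V d (slice_lift V U d c y) t j = (if j \<in> cols_A V d then c t * y j else 0)"
  unfolding slice_lift_def by (rule slice_unslice)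

lemma slice_slice_lift_eq:
  assumes "t \<in> cols_A U d" "\<forall>j. j \<notin> cols_A V d \<longrightarrow> y j = 0"
  shows "slice V d (slice_lift V U d c y) t = (\<lambda>j. c t * y j)"
  using assms by (auto simp: slice_slice_lift)

lemma slice_lift_outside: "i \<notin> cols_A (V \<union> U) d \<Longrightarrow> slice_lift V U d c y i = 0"
  unfolding slice_lift_def by (rule unslice_outside)

lemma slice_lift_pm1:
  assumes "\<forall>t. c t \<in> {-1,0,1}" "\<forall>j. y j \<in> {-1,0,1}"
  shows "slice_lift V U d c y i \<in> {-1,0,1}"
proof -
  have "c t * y j \<in> {-1,0,1}" for t j using assms(1)[rule_format, of t] assms(2)[rule_format, of j] by auto
  then show ?thesis unfolding slice_lift_def unslice_def by simp
qed

lemma slice_lift_nonzero: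
  assumes "t \<in> cols_A U d" "j \<in> cols_A V d" "c t \<noteq> 0" "y j \<noteq> 0"
  shows "\<exists>i. slice_lift V U d c y i \<noteq> 0"
proof -
  have "slice V d (slice_lift V U d c y) t j \<noteq> 0" using slice_slice_lift[OF assms(1)] assms(2-4) by simp
  then show ?thesis using slice_nonzeroD by blast
qed

end

lemma slice_scale: "slice V d (\<lambda>i. a * f i) t j = a * slice V d f t j"
  unfolding slice_def by simp

context vertex_split begin

lemma slice_lift_glue:
  assumes "j \<in> cols_A V d" "t \<in> cols_A U d"
  shows "slice_lift V U d c y (glue V j t) = c t * y j"
  using slice_slice_lift[OF assms(2), of c y j] assms(1) unfolding slice_def by simp

lemma slice_nonzero_in_lift:
  assumes "supp_within w (slice_lift V U d c f)" "t \<in> cols_A U d" "slice V d w t j \<noteq> 0"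
  shows "c t \<noteq> 0 \<and> f j \<noteq> 0"
proof -
  have "slice V d (slice_lift V U d c f) t j \<noteq> 0" using slice_supp_within[OF assms(1)] assms(3) by blast
  then show ?thesis using slice_slice_lift[OF assms(2)] by (simp split: if_splits)
qed

lemma A_kernel_cone_slice_lift:
  assumes "C \<subseteq> Pow V" "A_kernel V C d y"
  shows "A_kernel (V \<union> U) (cone_cx U C) d (slice_lift V U d c y)"
  unfolding A_kernel_cone[OF assms(1)]
  using slice_lift_outside slice_slice_lift_eq A_kernel_outside[OF assms(2)] A_kernel_scale[OF assms(2)]
  by simp

lemma A_kernel_ghost_slice_lift:
  assumes "C \<subseteq> Pow V" "\<forall>j. j \<notin> cols_A V d \<longrightarrow> y j = 0"
    and "A_kernel V C d (\<lambda>j. (\<Sum>t\<in>cols_A U d. c t) * y j)"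
  shows "A_kernel (V \<union> U) C d (slice_lift V U d c y)"
proof -
  have "(\<lambda>j. \<Sum>t\<in>cols_A U d. slice V d (slice_lift V U d c y) t j) = (\<lambda>j. (\<Sum>t\<in>cols_A U d. c t) * y j)"
    using slice_slice_lift_eq assms(2) by (simp add: sum_distrib_right)
  then show ?thesis unfolding A_kernel_ghost[OF assms(1)] using slice_lift_outside assms(3) by simp
qed

lemma A_kernel_lawrence_slice_lift:
  assumes "C \<subseteq> Pow V" "U = {u}" "A_kernel V C d y" "(\<Sum>t\<in>cols_A U d. c t) = 0"
  shows "A_kernel (V \<union> U) (lawrence_cx V u C) d (slice_lift V U d c y)"
proof -
  have "slice V d (slice_lift V U d c y) t = (\<lambda>j. c t * y j)" if "t \<in> cols_A U d" for t
    using slice_slice_lift_eq[OF that] A_kernel_outside[OF assms(3)] by simp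
  then show ?thesis unfolding A_kernel_lawrence[OF assms(1,2)]
    using slice_lift_outside A_kernel_scale[OF assms(3)] assms(4) by (simp add: sum_distrib_right[symmetric])
qed

definition lift_supports_are_lifts :: "'a set set \<Rightarrow> 'a set set \<Rightarrow> (('a \<Rightarrow> nat) \<Rightarrow> int) \<Rightarrow> bool" where
  "lift_supports_are_lifts C C' c \<longleftrightarrow> (\<forall>f w. A_kernel (V \<union> U) C' d w \<and> supp_within w (slice_lift V U d c f) \<longrightarrow>
     (\<exists>g. A_kernel V C d g \<and> (\<forall>t\<in>cols_A U d. slice V d w t = (\<lambda>j. c t * g j))))"

lemma lift_supports_are_liftsD:
  assumes "lift_supports_are_lifts C C' c" "A_kernel (V \<union> U) C' d w" "supp_within w (slice_lift V U d c f)"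
  obtains g where "A_kernel V C d g" "\<forall>t\<in>cols_A U d. slice V d w t = (\<lambda>j. c t * g j)"
  using assms unfolding lift_supports_are_lifts_def by blast

lemma rigid_slice_lift:
  assumes closed: "lift_supports_are_lifts C C' c" and kf: "A_kernel V C d f" and rf: "rigid V C d f"
    and t0: "t0 \<in> cols_A U d" "c t0 \<noteq> 0"
  shows "rigid (V \<union> U) C' d (slice_lift V U d c f)"
  unfolding rigid_def
proof (intro allI impI)
  fix w assume "A_kernel (V \<union> U) C' d w \<and> supp_within w (slice_lift V U d c f)"
  then have kw: "A_kernel (V \<union> U) C' d w" and sw: "supp_within w (slice_lift V U d c f)" by simp_all
  obtain g where kg: "A_kernel V C d g" and gs: "\<forall>t\<in>cols_A U d. slice V d w t = (\<lambda>j. c t * g j)"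
    using lift_supports_are_liftsD[OF closed kw sw] .
  have "supp_within g f"
    using slice_nonzero_in_lift[OF sw t0(1)] gs t0 by auto
  then obtain k where gk: "\<forall>j. g j = k * f j" using rigidD[OF rf kg] by blast
  have "w = (\<lambda>i. k * slice_lift V U d c f i)"
  proof (rule eq_if_slices_eq)
    show "\<forall>t\<in>cols_A U d. slice V d w t = slice V d (\<lambda>i. k * slice_lift V U d c f i) t"
      using gs gk slice_slice_lift_eq A_kernel_outside[OF kf] by (simp add: slice_scale fun_eq_iff)
  qed (use A_kernel_outside[OF kw] slice_lift_outside in simp_all)
  then show "\<exists>k. \<forall>i. w i = k * slice_lift V U d c f i" by blast
qed

lemma pm1_refinable_if_lift:
  assumes P': "A_pm1_refinable (V \<union> U) C' d" and closed: "lift_supports_are_lifts C C' c"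
    and lift: "\<And>y. A_kernel V C d y \<Longrightarrow> A_kernel (V \<union> U) C' d (slice_lift V U d c y)"
    and t0: "t0 \<in> cols_A U d" "c t0 = 1 \<or> c t0 = -1"
  shows "A_pm1_refinable V C d"
proof (rule A_pm1_refinableI)
  fix z j0 assume kz: "A_kernel V C d z" and zj0: "z j0 \<noteq> 0"
  have "j0 \<in> cols_A V d" using A_kernel_outside[OF kz] zj0 by blast
  then obtain i0 where "slice_lift V U d c z i0 \<noteq> 0" using slice_lift_nonzero t0 zj0 by fastforce
  then obtain y' where y': "pm1_refinement (V \<union> U) C' d y' (slice_lift V U d c z)"
    using A_pm1_refinableD[OF P' lift[OF kz]] by blast
  then obtain g where kg: "A_kernel V C d g" and gs: "\<forall>t\<in>cols_A U d. slice V d y' t = (\<lambda>j. c t * g j)"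
    using lift_supports_are_liftsD[OF closed] by blast
  have g_eq: "g j = c t0 * slice V d y' t0 j" for j using gs t0 by auto
  have "\<exists>j. g j \<noteq> 0"
  proof -
    obtain i where "y' i \<noteq> 0" using y' by blast
    then obtain t j where "t \<in> cols_A U d" "slice V d y' t j \<noteq> 0"
      using nonzero_slice A_kernel_outside y' by metis
    then show ?thesis using gs by auto
  qed
  moreover have "g j \<in> {-1,0,1}" for j using g_eq slice_pm1[of y' V d t0 j] y' t0(2) by auto
  moreover have "supp_within g z"
    using g_eq slice_nonzero_in_lift[OF _ t0(1)] y' by (metis mult_zero_right)
  ultimately show "\<exists>y. pm1_refinement V C d y z" using kg by blast
qed

lemma slice_lift_pm1_refinement:
  assumes lift: "A_kernel (V \<union> U) C' d (slice_lift V U d c y)"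
    and yv: "\<forall>j. j \<notin> cols_A V d \<longrightarrow> y j = 0" and c1: "\<forall>t. c t \<in> {-1,0,1}" and y1: "\<forall>j. y j \<in> {-1,0,1}"
    and t0: "t0 \<in> cols_A U d" "c t0 \<noteq> 0" and ny: "\<exists>j. y j \<noteq> 0"
    and supp: "\<forall>t\<in>cols_A U d. \<forall>j. c t \<noteq> 0 \<longrightarrow> y j \<noteq> 0 \<longrightarrow> slice V d z t j \<noteq> 0"
  shows "pm1_refinement (V \<union> U) C' d (slice_lift V U d c y) z"
proof (intro conjI)
  obtain j0 where j0: "y j0 \<noteq> 0" using ny by blast
  then have "j0 \<in> cols_A V d" using yv by blast
  then show "\<exists>i. slice_lift V U d c y i \<noteq> 0" using t0 j0 by (intro slice_lift_nonzero)
  show "\<forall>i. slice_lift V U d c y i \<in> {-1,0,1}" using slice_lift_pm1[OF c1 y1] by blast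
  show "supp_within (slice_lift V U d c y) z"
    by (rule supp_within_if_slices) (use slice_lift_outside slice_slice_lift_eq yv supp in simp_all)
qed (rule lift)

lemma rigid_pair_if_lift:
  assumes RP: "rigid_pair V C d" and closed: "lift_supports_are_lifts C C' c"
    and lift: "\<And>y. A_kernel V C d y \<Longrightarrow> A_kernel (V \<union> U) C' d (slice_lift V U d c y)"
    and t0: "t0 \<in> cols_A U d" "c t0 \<noteq> 0" and c1: "\<forall>t. c t \<in> {-1,0,1}"
  shows "rigid_pair (V \<union> U) C' d"
proof -
  obtain x y where kx: "A_kernel V C d x" and ky: "A_kernel V C d y" and rx: "rigid V C d x" and ry: "rigid V C d y"
    and x1: "\<forall>i. x i \<in> {-1,0,1}" and y1: "\<forall>i. y i \<in> {-1,0,1}"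
    and agree: "\<exists>j. x j = y j \<and> x j \<noteq> 0" and opp: "\<exists>k. x k = - y k \<and> x k \<noteq> 0"
    using RP unfolding rigid_pair_def by blast
  let ?x = "slice_lift V U d c x" and ?y = "slice_lift V U d c y"
  have at_glue: "?x (glue V j t0) = c t0 * x j" "?y (glue V j t0) = c t0 * y j" if "x j \<noteq> 0" for j
    using that A_kernel_outside[OF kx] t0(1) by (auto intro: slice_lift_glue)
  have "\<exists>i. ?x i = ?y i \<and> ?x i \<noteq> 0"
  proof -
    obtain j where "x j = y j" "x j \<noteq> 0" using agree by blast
    then show ?thesis using at_glue[of j] t0(2) by (intro exI[of _ "glue V j t0"]) simp
  qed
  moreover have "\<exists>i. ?x i = - ?y i \<and> ?x i \<noteq> 0"
  proof -
    obtain k where "x k = - y k" "x k \<noteq> 0" using opp by blast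
    then show ?thesis using at_glue[of k] t0(2) by (intro exI[of _ "glue V k t0"]) simp
  qed
  moreover have "\<forall>i. ?x i \<in> {-1,0,1}" "\<forall>i. ?y i \<in> {-1,0,1}" using slice_lift_pm1 c1 x1 y1 by blast+
  ultimately show ?thesis unfolding rigid_pair_def
    using lift[OF kx] lift[OF ky] rigid_slice_lift[OF closed kx rx t0] rigid_slice_lift[OF closed ky ry t0]
    by blast
qed


lemma slice_zero_if_coeff_zero:
  assumes "supp_within w (slice_lift V U d c f)" "t \<in> cols_A U d" "c t = 0"
  shows "slice V d w t j = 0"
  using slice_nonzero_in_lift[OF assms(1,2)] assms(3) by blast

lemma sum_cols_A_delta: "t0 \<in> cols_A U d \<Longrightarrow> (\<Sum>t\<in>cols_A U d. if t = t0 then a else 0) = a"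
  using finite_cols_A[OF finite_U] by simp

lemma sum_cols_A_of_bool: "t0 \<in> cols_A U d \<Longrightarrow> (\<Sum>t\<in>cols_A U d. of_bool (t = t0) * a) = (a :: int)"
proof -
  assume t0: "t0 \<in> cols_A U d"
  have "(\<Sum>t\<in>cols_A U d. of_bool (t = t0) * a) = (\<Sum>t\<in>cols_A U d. if t = t0 then a else 0)"
    by (rule sum.cong) auto
  then show ?thesis using sum_cols_A_delta[OF t0] by simp
qed

section \<open>Cones\<close>

lemma lift_supports_are_lifts_cone:
  assumes CV: "C \<subseteq> Pow V" and t0: "t0 \<in> cols_A U d"
  shows "lift_supports_are_lifts C (cone_cx U C) (\<lambda>t. of_bool (t = t0))"
  unfolding lift_supports_are_lifts_def
proof (intro allI impI)
  fix f w assume H: "A_kernel (V \<union> U) (cone_cx U C) d w \<and> supp_within w (slice_lift V U d (\<lambda>t. of_bool (t = t0)) f)"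
  have "slice V d w t = (\<lambda>j. of_bool (t = t0) * slice V d w t0 j)" if "t \<in> cols_A U d" for t
  proof (cases "t = t0")
    case False then show ?thesis using slice_zero_if_coeff_zero[OF conjunct2[OF H] that] by auto
  qed simp
  moreover have "A_kernel V C d (slice V d w t0)" using H t0 unfolding A_kernel_cone[OF CV] by blast
  ultimately show "\<exists>g. A_kernel V C d g \<and> (\<forall>t\<in>cols_A U d. slice V d w t = (\<lambda>j. of_bool (t = t0) * g j))"
    by blast
qed

lemma A_pm1_refinable_cone_iff:
  assumes CV: "C \<subseteq> Pow V" and ne: "cols_A U d \<noteq> {}"
  shows "A_pm1_refinable (V \<union> U) (cone_cx U C) d \<longleftrightarrow> A_pm1_refinable V C d"
proof
  obtain t0 where t0: "t0 \<in> cols_A U d" using ne by blast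
  assume "A_pm1_refinable (V \<union> U) (cone_cx U C) d"
  then show "A_pm1_refinable V C d"
    by (rule pm1_refinable_if_lift[OF _ lift_supports_are_lifts_cone[OF CV t0] A_kernel_cone_slice_lift[OF CV] t0])
      simp_all
next
  assume P: "A_pm1_refinable V C d"
  show "A_pm1_refinable (V \<union> U) (cone_cx U C) d"
  proof (rule A_pm1_refinableI)
    fix z i assume kz: "A_kernel (V \<union> U) (cone_cx U C) d z" and "z i \<noteq> 0"
    then obtain t0 j0 where t0: "t0 \<in> cols_A U d" and "slice V d z t0 j0 \<noteq> 0"
      using nonzero_slice A_kernel_outside by metis
    moreover have "A_kernel V C d (slice V d z t0)" using kz t0 unfolding A_kernel_cone[OF CV] by blast
    ultimately obtain y where y: "pm1_refinement V C d y (slice V d z t0)" using P A_pm1_refinableD by blast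
    have "pm1_refinement (V \<union> U) (cone_cx U C) d (slice_lift V U d (\<lambda>t. of_bool (t = t0)) y) z"
    proof (rule slice_lift_pm1_refinement[OF A_kernel_cone_slice_lift[OF CV]])
      show "\<forall>j. j \<notin> cols_A V d \<longrightarrow> y j = 0" using A_kernel_outside y by blast
      show "\<forall>t\<in>cols_A U d. \<forall>j. of_bool (t = t0) \<noteq> (0::int) \<longrightarrow> y j \<noteq> 0 \<longrightarrow> slice V d z t j \<noteq> 0"
        using y by simp
    qed (use t0 y in simp_all)
    then show "\<exists>y'. pm1_refinement (V \<union> U) (cone_cx U C) d y' z" by blast
  qed
qed

lemma rigid_pair_cone:
  assumes CV: "C \<subseteq> Pow V" and ne: "cols_A U d \<noteq> {}" and RP: "rigid_pair V C d"
  shows "rigid_pair (V \<union> U) (cone_cx U C) d"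
proof -
  obtain t0 where t0: "t0 \<in> cols_A U d" using ne by blast
  show ?thesis
    by (rule rigid_pair_if_lift[OF RP lift_supports_are_lifts_cone[OF CV t0] A_kernel_cone_slice_lift[OF CV] t0])
      simp_all
qed


section \<open>Vertices outside every face\<close>

lemma slice_eq_if_supp_within_unit_lift:
  assumes "supp_within w (slice_lift V U d (\<lambda>t. of_bool (t = t0)) f)" "t \<in> cols_A U d"
  shows "slice V d w t = (\<lambda>j. of_bool (t = t0) * slice V d w t0 j)"
proof (cases "t = t0")
  case False then show ?thesis using slice_zero_if_coeff_zero[OF assms] by auto
qed simp

lemma lift_supports_are_lifts_ghost:
  assumes CV: "C \<subseteq> Pow V" and t0: "t0 \<in> cols_A U d"
  shows "lift_supports_are_lifts C C (\<lambda>t. of_bool (t = t0))"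
  unfolding lift_supports_are_lifts_def
proof (intro allI impI)
  fix f w assume H: "A_kernel (V \<union> U) C d w \<and> supp_within w (slice_lift V U d (\<lambda>t. of_bool (t = t0)) f)"
  have slices: "slice V d w t = (\<lambda>j. of_bool (t = t0) * slice V d w t0 j)" if "t \<in> cols_A U d" for t
    using slice_eq_if_supp_within_unit_lift[OF conjunct2[OF H] that] .
  have "(\<Sum>t\<in>cols_A U d. slice V d w t j) = (\<Sum>t\<in>cols_A U d. of_bool (t = t0) * slice V d w t0 j)" for j
    by (rule sum.cong) (simp_all add: slices)
  then have "(\<lambda>j. \<Sum>t\<in>cols_A U d. slice V d w t j) = slice V d w t0"
    using sum_cols_A_of_bool[OF t0] by simp
  then have "A_kernel V C d (slice V d w t0)" using H unfolding A_kernel_ghost[OF CV] by simp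
  then show "\<exists>g. A_kernel V C d g \<and> (\<forall>t\<in>cols_A U d. slice V d w t = (\<lambda>j. of_bool (t = t0) * g j))"
    using slices by blast
qed

lemma A_kernel_ghost_unit_lift:
  assumes CV: "C \<subseteq> Pow V" and t0: "t0 \<in> cols_A U d" and ky: "A_kernel V C d y"
  shows "A_kernel (V \<union> U) C d (slice_lift V U d (\<lambda>t. of_bool (t = t0)) y)"
proof (rule A_kernel_ghost_slice_lift[OF CV])
  show "\<forall>j. j \<notin> cols_A V d \<longrightarrow> y j = 0" using A_kernel_outside[OF ky] by blast
  have "(\<Sum>t\<in>cols_A U d. of_bool (t = t0) :: int) = 1" using sum_cols_A_of_bool[OF t0, of 1] by simp
  then show "A_kernel V C d (\<lambda>j. (\<Sum>t\<in>cols_A U d. of_bool (t = t0)) * y j)" using ky by simp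
qed

text \<open>If two slices of \<open>z\<close> share a nonzero coordinate \<open>j\<close>, the vector with entries \<open>\<plusminus>1\<close> at \<open>j\<close>
  of these two slices lies in the kernel: its slices sum to zero.\<close>
lemma ghost_refinement_shared_coordinate:
  assumes CV: "C \<subseteq> Pow V" and t: "t1 \<in> cols_A U d" "t2 \<in> cols_A U d" "t1 \<noteq> t2"
    and nz: "slice V d z t1 j \<noteq> 0" "slice V d z t2 j \<noteq> 0"
  shows "\<exists>y. pm1_refinement (V \<union> U) C d y z"
proof -
  define c where "c = (\<lambda>t. of_bool (t = t1) - of_bool (t = t2) :: int)"
  define \<delta> where "\<delta> = (\<lambda>j'. of_bool (j' = j) :: int)"
  have j: "j \<in> cols_A V d" using slice_nonzeroD[OF nz(1)] by simp
  have \<delta>v: "\<forall>j'. j' \<notin> cols_A V d \<longrightarrow> \<delta> j' = 0" unfolding \<delta>_def using j by auto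
  have sum0: "(\<Sum>t\<in>cols_A U d. c t) = 0"
    unfolding c_def sum_subtractf using sum_cols_A_of_bool[OF t(1), of 1] sum_cols_A_of_bool[OF t(2), of 1]
    by simp
  have "A_kernel (V \<union> U) C d (slice_lift V U d c \<delta>)"
    by (rule A_kernel_ghost_slice_lift[OF CV \<delta>v]) (simp add: sum0 A_kernel_zero)
  then have "pm1_refinement (V \<union> U) C d (slice_lift V U d c \<delta>) z"
  proof (rule slice_lift_pm1_refinement[OF _ \<delta>v _ _ t(1)])
    show "\<forall>t\<in>cols_A U d. \<forall>j'. c t \<noteq> 0 \<longrightarrow> \<delta> j' \<noteq> 0 \<longrightarrow> slice V d z t j' \<noteq> 0"
      unfolding c_def \<delta>_def using nz by auto
  qed (auto simp: c_def \<delta>_def t(3))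
  then show ?thesis by blast
qed

lemma sum_cols_A_single_support:
  assumes t: "t \<in> cols_A U d" and others: "\<And>t'. t' \<in> cols_A U d \<Longrightarrow> t' \<noteq> t \<Longrightarrow> f t' = 0"
  shows "(\<Sum>t'\<in>cols_A U d. f t') = f t"
proof -
  have "(\<Sum>t'\<in>cols_A U d. f t') = (\<Sum>t'\<in>cols_A U d. if t' = t then f t else 0)"
    using others by (intro sum.cong refl) auto
  then show ?thesis using sum_cols_A_delta[OF t] by simp
qed

lemma sum_slices_distributed:
  assumes disj: "\<And>j t1 t2. t1 \<in> cols_A U d \<Longrightarrow> t2 \<in> cols_A U d \<Longrightarrow>
      slice V d z t1 j \<noteq> 0 \<Longrightarrow> slice V d z t2 j \<noteq> 0 \<Longrightarrow> t1 = t2"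
    and covered: "\<And>j. y j \<noteq> 0 \<Longrightarrow> \<exists>t\<in>cols_A U d. slice V d z t j \<noteq> 0"
    and sl: "\<And>t j. t \<in> cols_A U d \<Longrightarrow> slice V d y' t j = (if slice V d z t j \<noteq> 0 then y j else 0)"
  shows "(\<Sum>t\<in>cols_A U d. slice V d y' t j) = y j"
proof (cases "y j = 0")
  case False
  then obtain t1 where t1: "t1 \<in> cols_A U d" "slice V d z t1 j \<noteq> 0" using covered by blast
  have others: "slice V d y' t j = 0" if "t \<in> cols_A U d" "t \<noteq> t1" for t
    using sl[OF that(1)] disj[OF that(1) t1(1) _ t1(2)] that(2) by auto
  then show ?thesis using sum_cols_A_single_support[OF t1(1) others] sl[OF t1(1)] t1(2) by simp
next
  case True
  then have "slice V d y' t j = 0" if "t \<in> cols_A U d" for t using sl[OF that] by simp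
  then show ?thesis using True by (simp add: sum.neutral)
qed

text \<open>If no two slices of \<open>z\<close> share a nonzero coordinate, refine the sum of the slices and
  distribute the refinement back over the slices.\<close>
lemma ghost_refinement_disjoint_slices:
  assumes CV: "C \<subseteq> Pow V" and P: "A_pm1_refinable V C d" and kz: "A_kernel (V \<union> U) C d z" and zi: "z i \<noteq> 0"
    and disj: "\<And>j t1 t2. t1 \<in> cols_A U d \<Longrightarrow> t2 \<in> cols_A U d \<Longrightarrow>
      slice V d z t1 j \<noteq> 0 \<Longrightarrow> slice V d z t2 j \<noteq> 0 \<Longrightarrow> t1 = t2"
  shows "\<exists>y. pm1_refinement (V \<union> U) C d y z"
proof -
  define s where "s = (\<lambda>j. \<Sum>t\<in>cols_A U d. slice V d z t j)"
  obtain t0 j0 where t0: "t0 \<in> cols_A U d" and "slice V d z t0 j0 \<noteq> 0"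
    using nonzero_slice[of z i] A_kernel_outside[OF kz] zi by blast
  moreover have others: "slice V d z t j0 = 0" if "t \<in> cols_A U d" "t \<noteq> t0" for t
    using disj[OF that(1) t0] that(2) \<open>slice V d z t0 j0 \<noteq> 0\<close> by blast
  ultimately have "s j0 \<noteq> 0" unfolding s_def using sum_cols_A_single_support[OF t0 others] by simp
  moreover have "A_kernel V C d s" using kz unfolding s_def A_kernel_ghost[OF CV] by simp
  ultimately obtain y where y: "pm1_refinement V C d y s" using P A_pm1_refinableD by blast
  have covered: "\<exists>t\<in>cols_A U d. slice V d z t j \<noteq> 0" if "y j \<noteq> 0" for j
  proof (rule ccontr)
    assume "\<not> (\<exists>t\<in>cols_A U d. slice V d z t j \<noteq> 0)"
    then have "s j = 0" unfolding s_def by (intro sum.neutral) blast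
    then show False using y that by blast
  qed
  define y' where "y' = unslice V U d (\<lambda>t j. if slice V d z t j \<noteq> 0 then y j else 0)"
  have sl: "slice V d y' t j = (if slice V d z t j \<noteq> 0 then y j else 0)" if "t \<in> cols_A U d" for t j
    unfolding y'_def slice_unslice[OF that] by (cases "j \<in> cols_A V d") (simp_all add: slice_outside)
  have "(\<Sum>t\<in>cols_A U d. slice V d y' t j) = y j" for j
    by (rule sum_slices_distributed) (fact disj covered sl)+
  then have "(\<lambda>j. \<Sum>t\<in>cols_A U d. slice V d y' t j) = y" by blast
  then have "A_kernel (V \<union> U) C d y'"
    unfolding A_kernel_ghost[OF CV] using y unslice_outside unfolding y'_def by simp
  moreover have "\<exists>i. y' i \<noteq> 0"
  proof -
    obtain j where "y j \<noteq> 0" using y by blast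
    with covered obtain t where t: "t \<in> cols_A U d" "slice V d z t j \<noteq> 0" by blast
    then have "slice V d y' t j \<noteq> 0" using sl[OF t(1)] \<open>y j \<noteq> 0\<close> by simp
    then show ?thesis using slice_nonzeroD by blast
  qed
  moreover have "\<forall>i. y' i \<in> {-1,0,1}" unfolding y'_def unslice_def using y by simp
  moreover have "supp_within y' z"
    by (rule supp_within_if_slices) (use sl unslice_outside in \<open>simp_all add: y'_def\<close>)
  ultimately show ?thesis by blast
qed

lemma A_pm1_refinable_ghost_iff:
  assumes CV: "C \<subseteq> Pow V" and ne: "cols_A U d \<noteq> {}"
  shows "A_pm1_refinable (V \<union> U) C d \<longleftrightarrow> A_pm1_refinable V C d"
proof
  obtain t0 where t0: "t0 \<in> cols_A U d" using ne by blast
  assume "A_pm1_refinable (V \<union> U) C d"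
  then show "A_pm1_refinable V C d"
    by (rule pm1_refinable_if_lift[OF _ lift_supports_are_lifts_ghost[OF CV t0] A_kernel_ghost_unit_lift[OF CV t0] t0])
      simp_all
next
  assume P: "A_pm1_refinable V C d"
  show "A_pm1_refinable (V \<union> U) C d"
  proof (rule A_pm1_refinableI)
    fix z i assume kz: "A_kernel (V \<union> U) C d z" and zi: "z i \<noteq> 0"
    show "\<exists>y. pm1_refinement (V \<union> U) C d y z"
    proof (cases "\<exists>j t1 t2. t1 \<in> cols_A U d \<and> t2 \<in> cols_A U d \<and> t1 \<noteq> t2 \<and>
        slice V d z t1 j \<noteq> 0 \<and> slice V d z t2 j \<noteq> 0")
      case True
      then show ?thesis using ghost_refinement_shared_coordinate[OF CV] by blast
    next
      case False
      then show ?thesis using ghost_refinement_disjoint_slices[OF CV P kz zi] by blast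
    qed
  qed
qed

lemma rigid_pair_ghost:
  assumes CV: "C \<subseteq> Pow V" and ne: "cols_A U d \<noteq> {}" and RP: "rigid_pair V C d"
  shows "rigid_pair (V \<union> U) C d"
proof -
  obtain t0 where t0: "t0 \<in> cols_A U d" using ne by blast
  show ?thesis
    by (rule rigid_pair_if_lift[OF RP lift_supports_are_lifts_ghost[OF CV t0] A_kernel_ghost_unit_lift[OF CV t0] t0])
      simp_all
qed

end

lemma sum_two_points:
  assumes "finite A" "a \<in> A" "b \<in> A" "a \<noteq> b" "\<forall>t\<in>A. t \<noteq> a \<and> t \<noteq> b \<longrightarrow> f t = 0"
  shows "sum f A = f a + f b"
proof -
  have "sum f A = sum f {a, b}" using assms by (intro sum.mono_neutral_right) auto
  then show ?thesis using assms(4) by simp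
qed

context vertex_split begin

section \<open>Lawrence liftings\<close>

lemma sum_cols_A_of_bool_diff:
  assumes "t1 \<in> cols_A U d" "t2 \<in> cols_A U d"
  shows "(\<Sum>t\<in>cols_A U d. of_bool (t = t1) - of_bool (t = t2) :: int) = 0"
  using sum_cols_A_of_bool[OF assms(1), of 1] sum_cols_A_of_bool[OF assms(2), of 1] by (simp add: sum_subtractf)

lemma A_kernel_lawrence_diff_lift:
  assumes CV: "C \<subseteq> Pow V" and Uu: "U = {u}" and t: "t1 \<in> cols_A U d" "t2 \<in> cols_A U d"
    and ky: "A_kernel V C d y"
  shows "A_kernel (V \<union> U) (lawrence_cx V u C) d (slice_lift V U d (\<lambda>t. of_bool (t = t1) - of_bool (t = t2)) y)"
  by (rule A_kernel_lawrence_slice_lift[OF CV Uu ky sum_cols_A_of_bool_diff[OF t]])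

lemma lift_supports_are_lifts_lawrence:
  assumes CV: "C \<subseteq> Pow V" and Uu: "U = {u}" and t: "t1 \<in> cols_A U d" "t2 \<in> cols_A U d" "t1 \<noteq> t2"
  shows "lift_supports_are_lifts C (lawrence_cx V u C) (\<lambda>t. of_bool (t = t1) - of_bool (t = t2))"
  unfolding lift_supports_are_lifts_def
proof (intro allI impI)
  let ?c = "\<lambda>t. of_bool (t = t1) - of_bool (t = t2) :: int"
  fix f w assume H: "A_kernel (V \<union> U) (lawrence_cx V u C) d w \<and> supp_within w (slice_lift V U d ?c f)"
  then have kw: "(\<forall>j. (\<Sum>t\<in>cols_A U d. slice V d w t j) = 0) \<and> (\<forall>t\<in>cols_A U d. A_kernel V C d (slice V d w t))"
    unfolding A_kernel_lawrence[OF CV Uu] by simp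
  have other: "slice V d w t j = 0" if "t \<in> cols_A U d" "t \<noteq> t1" "t \<noteq> t2" for t j
    using slice_zero_if_coeff_zero[OF conjunct2[OF H] that(1)] that(2,3) by simp
  have "(\<Sum>t\<in>cols_A U d. slice V d w t j) = slice V d w t1 j + slice V d w t2 j" for j
    using other by (intro sum_two_points[OF finite_cols_A[OF finite_U] t]) blast
  then have "slice V d w t2 j = - slice V d w t1 j" for j using kw by (simp add: add_eq_0_iff)
  then have "slice V d w t = (\<lambda>j. ?c t * slice V d w t1 j)" if "t \<in> cols_A U d" for t
    using other[OF that] t(3) by (cases "t = t1"; cases "t = t2") auto
  then show "\<exists>g. A_kernel V C d g \<and> (\<forall>t\<in>cols_A U d. slice V d w t = (\<lambda>j. ?c t * g j))"
    using kw t(1) by blast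
qed

lemma A_pm1_refinable_of_lawrence:
  assumes CV: "C \<subseteq> Pow V" and Uu: "U = {u}" and t: "t1 \<in> cols_A U d" "t2 \<in> cols_A U d" "t1 \<noteq> t2"
    and P': "A_pm1_refinable (V \<union> U) (lawrence_cx V u C) d"
  shows "A_pm1_refinable V C d"
  by (rule pm1_refinable_if_lift[OF P' lift_supports_are_lifts_lawrence[OF CV Uu t]
        A_kernel_lawrence_diff_lift[OF CV Uu t(1,2)] t(1)]) (simp_all add: t(3))

lemma A_pm1_refinable_lawrence_two_levels:
  assumes CV: "C \<subseteq> Pow V" and Uu: "U = {u}" and two: "cols_A U d = {t1, t2}" "t1 \<noteq> t2"
    and P: "A_pm1_refinable V C d"
  shows "A_pm1_refinable (V \<union> U) (lawrence_cx V u C) d"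
proof (rule A_pm1_refinableI)
  fix z i assume kz: "A_kernel (V \<union> U) (lawrence_cx V u C) d z" and "z i \<noteq> 0"
  then obtain t j0 where t: "t \<in> cols_A U d" and "slice V d z t j0 \<noteq> 0"
    using nonzero_slice[of z i] A_kernel_outside[OF kz] by blast
  moreover have "A_kernel V C d (slice V d z t)" using kz t unfolding A_kernel_lawrence[OF CV Uu] by blast
  ultimately obtain y where y: "pm1_refinement V C d y (slice V d z t)" using P A_pm1_refinableD by blast
  define t' where "t' = (if t = t1 then t2 else t1)"
  have t': "t' \<in> cols_A U d" "t' \<noteq> t" "cols_A U d = {t, t'}" using two t unfolding t'_def by auto
  have "slice V d z t' j = - slice V d z t j" for j
    using kz t'(2) unfolding A_kernel_lawrence[OF CV Uu] t'(3) by (simp add: add_eq_0_iff)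
  then have "pm1_refinement (V \<union> U) (lawrence_cx V u C) d
      (slice_lift V U d (\<lambda>s. of_bool (s = t) - of_bool (s = t')) y) z"
    using t'(2,3) y A_kernel_outside
    by (intro slice_lift_pm1_refinement[OF A_kernel_lawrence_diff_lift[OF CV Uu t t'(1)] _ _ _ t]) auto
  then show "\<exists>y. pm1_refinement (V \<union> U) (lawrence_cx V u C) d y z" by blast
qed

lemma rigid_pair_lawrence:
  assumes CV: "C \<subseteq> Pow V" and Uu: "U = {u}" and t: "t1 \<in> cols_A U d" "t2 \<in> cols_A U d" "t1 \<noteq> t2"
    and RP: "rigid_pair V C d"
  shows "rigid_pair (V \<union> U) (lawrence_cx V u C) d"
  by (rule rigid_pair_if_lift[OF RP lift_supports_are_lifts_lawrence[OF CV Uu t]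
        A_kernel_lawrence_diff_lift[OF CV Uu t(1,2)] t(1)]) (simp_all add: t(3))


text \<open>With three levels \<open>t1, t2, t3\<close> at the Lawrence vertex, the kernel vector with slices \<open>x\<close>, \<open>y\<close>
  and \<open>-(x + y)\<close> at these levels has no \<open>{0,\<plusminus>1}\<close> refinement: by rigidity such a refinement has slices
  \<open>c\<^sub>1 x\<close>, \<open>c\<^sub>2 y\<close> and \<open>-(c\<^sub>1 x + c\<^sub>2 y)\<close>; the zero of \<open>x + y\<close> where \<open>x = -y\<close> forces \<open>c\<^sub>1 = c\<^sub>2\<close>,
  and the entry \<open>-2c\<^sub>1x\<close> where \<open>x = y\<close> forces \<open>c\<^sub>1 = 0\<close>.\<close>
lemma not_A_pm1_refinable_lawrence:
  assumes CV: "C \<subseteq> Pow V" and Uu: "U = {u}"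
    and t: "t1 \<in> cols_A U d" "t2 \<in> cols_A U d" "t3 \<in> cols_A U d" "t1 \<noteq> t2" "t1 \<noteq> t3" "t2 \<noteq> t3"
    and RP: "rigid_pair V C d"
  shows "\<not> A_pm1_refinable (V \<union> U) (lawrence_cx V u C) d"
proof
  assume P': "A_pm1_refinable (V \<union> U) (lawrence_cx V u C) d"
  obtain x y where kx: "A_kernel V C d x" and ky: "A_kernel V C d y" and rx: "rigid V C d x" and ry: "rigid V C d y"
    and x1: "\<forall>i. x i \<in> {-1,0,1}" and agree: "\<exists>j. x j = y j \<and> x j \<noteq> 0" and opp: "\<exists>k. x k = - y k \<and> x k \<noteq> 0"
    using RP unfolding rigid_pair_def by blast
  define a where "a = (\<lambda>t. of_bool (t = t1) - of_bool (t = t3) :: int)"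
  define b where "b = (\<lambda>t. of_bool (t = t2) - of_bool (t = t3) :: int)"
  define z where "z = (\<lambda>i. 1 * slice_lift V U d a x i + 1 * slice_lift V U d b y i)"
  have kz: "A_kernel (V \<union> U) (lawrence_cx V u C) d z"
    unfolding z_def a_def b_def
    by (intro A_kernel_lincomb A_kernel_lawrence_diff_lift[OF CV Uu] t kx ky)
  have slz: "slice V d z t j = a t * x j + b t * y j" if "t \<in> cols_A U d" for t j
    unfolding z_def slice_lincomb
    using slice_slice_lift_eq[OF that] A_kernel_outside[OF kx] A_kernel_outside[OF ky] by simp
  obtain j where j: "x j = y j" "x j \<noteq> 0" using agree by blast
  obtain k where k: "x k = - y k" "x k \<noteq> 0" using opp by blast
  have "slice V d z t1 j \<noteq> 0" using slz[OF t(1)] j t(4,5) unfolding a_def b_def by simp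
  then obtain i where "z i \<noteq> 0" using slice_nonzeroD by blast
  then obtain w where w: "pm1_refinement (V \<union> U) (lawrence_cx V u C) d w z"
    using A_pm1_refinableD[OF P' kz] by blast
  then have kw: "(\<forall>i. i \<notin> cols_A (V \<union> U) d \<longrightarrow> w i = 0) \<and> (\<forall>j. (\<Sum>t\<in>cols_A U d. slice V d w t j) = 0) \<and>
      (\<forall>t\<in>cols_A U d. A_kernel V C d (slice V d w t))"
    unfolding A_kernel_lawrence[OF CV Uu] by blast
  have sw: "slice V d w t j' = 0" if "t \<in> cols_A U d" "slice V d z t j' = 0" for t j'
    using slice_supp_within[of w z V d t] w that(2) by blast
  have other: "slice V d w t j' = 0" if "t \<in> cols_A U d" "t \<noteq> t1" "t \<noteq> t2" "t \<noteq> t3" for t j'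
    using sw[OF that(1)] slz[OF that(1)] that unfolding a_def b_def by simp
  obtain c1 where c1: "\<forall>j'. slice V d w t1 j' = c1 * x j'"
    using rigidD[OF rx] kw t(1) sw[OF t(1)] slz[OF t(1)] t(4,5) unfolding a_def b_def by fastforce
  obtain c2 where c2: "\<forall>j'. slice V d w t2 j' = c2 * y j'"
    using rigidD[OF ry] kw t(2) sw[OF t(2)] slz[OF t(2)] t(4,6) unfolding a_def b_def by fastforce
  have w3: "slice V d w t3 j' = - (c1 * x j' + c2 * y j')" for j'
  proof -
    have "(\<Sum>t\<in>cols_A U d. slice V d w t j') = slice V d w t1 j' + slice V d w t2 j' + slice V d w t3 j'"
      using other finite_cols_A[OF finite_U] t by (subst sum.mono_neutral_right[of _ "{t1, t2, t3}"]) auto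
    then show ?thesis using kw c1 c2 by simp
  qed
  have "slice V d z t3 k = 0" using slz[OF t(3)] k t(5,6) unfolding a_def b_def by simp
  then have "c1 * x k + c2 * y k = 0" using sw[OF t(3)] w3 by (metis neg_equal_0_iff_equal)
  then have c12: "c1 = c2" using k by (simp add: algebra_simps)
  have "- (c1 * x j + c2 * y j) \<in> {-1,0,1}" using w3[of j, symmetric] slice_pm1[of w V d t3 j] w by simp
  then have "2 * c1 * x j \<in> {-1,0,1}" using j c12 by (auto simp: algebra_simps)
  moreover have "x j = 1 \<or> x j = -1" using x1[rule_format, of j] j(2) by auto
  ultimately have c0: "c1 = 0" by auto
  have "slice V d w t j' = 0" if "t \<in> cols_A U d" for t j'
    using other[OF that] c1 c2 w3 c0 c12 by (cases "t = t1"; cases "t = t2"; cases "t = t3") auto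
  then have "w = (\<lambda>i. 0)"
    by (intro eq_if_slices_eq) (use kw in \<open>auto simp: slice_def\<close>)
  then show False using w by simp
qed

end

section \<open>Fewer levels\<close>

lemma A_kernel_cong_levels:
  assumes dd: "\<forall>v\<in>V. d v = d' v" and CV: "C \<subseteq> Pow V"
  shows "A_kernel V C d z = A_kernel V C d' z"
proof -
  have c: "cols_A V d = cols_A V d'" using cols_A_cong[OF dd] .
  have "PiE S (\<lambda>v. {1..d v}) = PiE S (\<lambda>v. {1..d' v})" if "S \<in> C" for S
    using that CV dd by (intro PiE_cong) auto
  moreover have "marginal V d S e z = marginal V d' S e z" for S e unfolding marginal_def c ..
  ultimately show ?thesis unfolding A_kernel_def c by simp
qed

lemma A_pm1_refinable_cong_levels:
  "\<forall>v\<in>V. d v = d' v \<Longrightarrow> C \<subseteq> Pow V \<Longrightarrow> A_pm1_refinable V C d = A_pm1_refinable V C d'"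
  by (simp only: A_pm1_refinable_def A_kernel_cong_levels)

text \<open>Vectors for fewer levels \<open>d' \<le> d\<close> are vectors for \<open>d\<close> supported on the smaller box of columns.\<close>
locale fewer_levels =
  fixes V :: "'a set" and C :: "'a set set" and d d' :: "'a \<Rightarrow> nat"
  assumes finite_V: "finite V" and CV: "C \<subseteq> Pow V" and le: "\<forall>v\<in>V. d' v \<le> d v"
begin

lemma cols_A_mono: "cols_A V d' \<subseteq> cols_A V d"
  unfolding cols_A_def by (rule PiE_mono) (use le in auto)

lemma marginal_fewer_levels:
  "\<forall>i. i \<notin> cols_A V d' \<longrightarrow> w i = 0 \<Longrightarrow> marginal V d S e w = marginal V d' S e w"
  unfolding marginal_def by (rule sum.mono_neutral_right[OF finite_cols_A[OF finite_V] cols_A_mono]) auto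

lemma A_kernel_more_levels:
  assumes K: "A_kernel V C d' w"
  shows "A_kernel V C d w"
  unfolding A_kernel_def
proof (intro conjI allI impI ballI)
  have wv: "\<forall>i. i \<notin> cols_A V d' \<longrightarrow> w i = 0" using A_kernel_outside[OF K] by blast
  then show "i \<notin> cols_A V d \<Longrightarrow> w i = 0" for i using cols_A_mono by blast
  fix S e assume S: "S \<in> C" and e: "e \<in> PiE S (\<lambda>v. {1..d v})"
  show "marginal V d S e w = 0"
  proof (cases "e \<in> PiE S (\<lambda>v. {1..d' v})")
    case True then show ?thesis using K S marginal_fewer_levels[OF wv] unfolding A_kernel_def by simp
  next
    case False
    have "restrict i S \<noteq> e" if "i \<in> cols_A V d'" for i
    proof -
      have "S \<subseteq> V" using S CV by blast
      then have "restrict i S \<in> PiE S (\<lambda>v. {1..d' v})" using that unfolding cols_A_def by auto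
      then show ?thesis using False by auto
    qed
    then have "marginal V d' S e w = 0" unfolding marginal_def by (intro sum.neutral) auto
    then show ?thesis using marginal_fewer_levels[OF wv] by simp
  qed
qed

lemma A_kernel_fewer_levels:
  assumes K: "A_kernel V C d w" and wv: "\<forall>i. w i \<noteq> 0 \<longrightarrow> i \<in> cols_A V d'"
  shows "A_kernel V C d' w"
  unfolding A_kernel_def
proof (intro conjI allI impI ballI)
  fix S e assume S: "S \<in> C" and e: "e \<in> PiE S (\<lambda>v. {1..d' v})"
  have "PiE S (\<lambda>v. {1..d' v}) \<subseteq> PiE S (\<lambda>v. {1..d v})" using le S CV by (intro PiE_mono) auto
  then have "marginal V d S e w = 0" using K S e unfolding A_kernel_def by blast
  moreover have "\<forall>i. i \<notin> cols_A V d' \<longrightarrow> w i = 0" using wv by blast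
  ultimately show "marginal V d' S e w = 0" using marginal_fewer_levels by simp
qed (use wv in blast)

lemma A_pm1_refinable_fewer_levels: "A_pm1_refinable V C d \<Longrightarrow> A_pm1_refinable V C d'"
proof (rule A_pm1_refinableI)
  fix z i assume P: "A_pm1_refinable V C d" and kz: "A_kernel V C d' z" and "z i \<noteq> 0"
  then obtain y where y: "pm1_refinement V C d y z" using A_pm1_refinableD A_kernel_more_levels by blast
  moreover have "\<forall>i. y i \<noteq> 0 \<longrightarrow> i \<in> cols_A V d'" using y A_kernel_outside[OF kz] by blast
  ultimately show "\<exists>y. pm1_refinement V C d' y z" using A_kernel_fewer_levels by blast
qed

lemma rigid_more_levels:
  assumes kx: "A_kernel V C d' x" and rx: "rigid V C d' x"
  shows "rigid V C d x"
  unfolding rigid_def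
proof (intro allI impI)
  fix w assume w: "A_kernel V C d w \<and> supp_within w x"
  then have "A_kernel V C d' w" using A_kernel_fewer_levels A_kernel_outside[OF kx] by blast
  then show "\<exists>c. \<forall>i. w i = c * x i" using rigidD[OF rx] w by blast
qed

lemma rigid_pair_more_levels: "rigid_pair V C d' \<Longrightarrow> rigid_pair V C d"
  unfolding rigid_pair_def using A_kernel_more_levels rigid_more_levels by metis

end

section \<open>The complex \<open>D\<^sub>m\<^sub>,\<^sub>n\<close>\<close>

lemma Dmn_char:
  assumes "A \<inter> B = {}"
  shows "Dmn A B = {S. S \<subseteq> A \<union> B \<and> (\<exists>a\<in>A. a \<notin> S) \<and> (\<exists>b\<in>B. b \<notin> S)}"
  unfolding Dmn_def alexander_dual_def simplex_disj_union_def using assms by auto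

lemma Dmn_sym: "Dmn A B = Dmn B A"
  unfolding Dmn_def simplex_disj_union_def by (simp add: Un_commute)

lemma bij_betw_update_two:
  assumes a: "a \<in> V" and b: "b \<in> V" and ab: "a \<noteq> b" and i: "i \<in> cols_A V d"
  shows "bij_betw (\<lambda>(p, q). i(a := p, b := q)) ({1..d a} \<times> {1..d b})
    {i' \<in> cols_A V d. restrict i' (V - {a, b}) = restrict i (V - {a, b})}"
proof (rule bij_betw_byWitness[where f' = "\<lambda>i'. (i' a, i' b)"])
  show "\<forall>x\<in>{1..d a} \<times> {1..d b}. (\<lambda>i'. (i' a, i' b)) ((\<lambda>(p, q). i(a := p, b := q)) x) = x"
    using ab by auto
  show "\<forall>i'\<in>{i' \<in> cols_A V d. restrict i' (V - {a, b}) = restrict i (V - {a, b})}.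
      (\<lambda>(p, q). i(a := p, b := q)) (i' a, i' b) = i'"
  proof (intro ballI ext)
    fix i' x assume "i' \<in> {i' \<in> cols_A V d. restrict i' (V - {a, b}) = restrict i (V - {a, b})}"
    then have "i' \<in> cols_A V d" "x \<in> V - {a, b} \<Longrightarrow> i' x = i x" by (auto dest: fun_cong[of _ _ x])
    then show "(\<lambda>(p, q). i(a := p, b := q)) (i' a, i' b) x = i' x"
      using i by (cases "x \<in> V") (auto simp: cols_A_def PiE_def extensional_def)
  qed
  show "(\<lambda>(p, q). i(a := p, b := q)) ` ({1..d a} \<times> {1..d b}) \<subseteq>
      {i' \<in> cols_A V d. restrict i' (V - {a, b}) = restrict i (V - {a, b})}"
    using i a b by (auto simp: update_in_cols_A fun_eq_iff)
  show "(\<lambda>i'. (i' a, i' b)) ` {i' \<in> cols_A V d. restrict i' (V - {a, b}) = restrict i (V - {a, b})} \<subseteq>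
      {1..d a} \<times> {1..d b}"
    using a b unfolding cols_A_def by auto
qed

lemma marginal_codim_two:
  assumes "finite V" "a \<in> V" "b \<in> V" "a \<noteq> b" "i \<in> cols_A V d"
  shows "marginal V d (V - {a, b}) (restrict i (V - {a, b})) z = (\<Sum>p\<in>{1..d a}. \<Sum>q\<in>{1..d b}. z (i(a := p, b := q)))"
proof -
  have "marginal V d (V - {a, b}) (restrict i (V - {a, b})) z =
      (\<Sum>i'\<in>{i' \<in> cols_A V d. restrict i' (V - {a, b}) = restrict i (V - {a, b})}. z i')"
    unfolding marginal_def using finite_cols_A[OF assms(1)] by (simp add: sum.inter_filter)
  also have "\<dots> = (\<Sum>(p, q)\<in>{1..d a} \<times> {1..d b}. z (i(a := p, b := q)))"
    using sum.reindex_bij_betw[OF bij_betw_update_two[OF assms(2-5)], of z] by (simp add: case_prod_beta')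
  finally show ?thesis by (simp add: sum.cartesian_product)
qed

lemma A_kernel_Dmn_iff:
  assumes AB: "A \<inter> B = {}" and fA: "finite A" and fB: "finite B" and d1: "\<forall>v\<in>A \<union> B. d v \<ge> 1"
  shows "A_kernel (A \<union> B) (Dmn A B) d z \<longleftrightarrow> (\<forall>i. i \<notin> cols_A (A \<union> B) d \<longrightarrow> z i = 0) \<and>
    (\<forall>a\<in>A. \<forall>b\<in>B. \<forall>i\<in>cols_A (A \<union> B) d. (\<Sum>p\<in>{1..d a}. \<Sum>q\<in>{1..d b}. z (i(a := p, b := q))) = 0)"
    (is "_ \<longleftrightarrow> ?outside \<and> ?squares")
proof -
  have fV: "finite (A \<union> B)" using fA fB by simp
  have ab: "a \<in> A \<union> B" "b \<in> A \<union> B" "a \<noteq> b" if "a \<in> A" "b \<in> B" for a b using that AB by auto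
  have face: "A \<union> B - {a, b} \<in> Dmn A B" if "a \<in> A" "b \<in> B" for a b
    unfolding Dmn_char[OF AB] using that by auto
  text \<open>Every face of \<open>D\<^sub>m\<^sub>,\<^sub>n\<close> lies in a face \<open>V - {a, b}\<close>, and each marginal over such a face is
    one of the sums in \<open>?squares\<close>.\<close>
  have codim_two: "marginal (A \<union> B) d (A \<union> B - {a, b}) e z = 0"
    if ?squares "a \<in> A" "b \<in> B" "e \<in> PiE (A \<union> B - {a, b}) (\<lambda>v. {1..d v})" for a b e
  proof -
    define i where "i = e(a := 1, b := 1)"
    have i: "i \<in> cols_A (A \<union> B) d" unfolding i_def cols_A_def using that(4) d1 ab[OF that(2,3)]
      by (auto simp: PiE_def extensional_def Pi_def)
    have "restrict i (A \<union> B - {a, b}) = e" unfolding i_def using that(4)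
      by (auto simp: fun_eq_iff PiE_def extensional_def)
    then show ?thesis using marginal_codim_two[OF fV ab[OF that(2,3)] i] that(1-3) i by simp
  qed
  show ?thesis
  proof (intro iffI conjI)
    assume K: "A_kernel (A \<union> B) (Dmn A B) d z"
    then show ?outside unfolding A_kernel_def by blast
    show ?squares
    proof (intro ballI)
      fix a b i assume a: "a \<in> A" and b: "b \<in> B" and i: "i \<in> cols_A (A \<union> B) d"
      have "restrict i (A \<union> B - {a, b}) \<in> PiE (A \<union> B - {a, b}) (\<lambda>v. {1..d v})" using i unfolding cols_A_def by auto
      then have "marginal (A \<union> B) d (A \<union> B - {a, b}) (restrict i (A \<union> B - {a, b})) z = 0"
        using K face[OF a b] unfolding A_kernel_def by blast
      then show "(\<Sum>p\<in>{1..d a}. \<Sum>q\<in>{1..d b}. z (i(a := p, b := q))) = 0"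
        unfolding marginal_codim_two[OF fV ab[OF a b] i] .
    qed
  next
    assume H: "?outside \<and> ?squares"
    show "A_kernel (A \<union> B) (Dmn A B) d z" unfolding A_kernel_def
    proof (intro conjI ballI)
      fix S e assume S: "S \<in> Dmn A B" and e: "e \<in> PiE S (\<lambda>v. {1..d v})"
      obtain a b where a: "a \<in> A" "a \<notin> S" and b: "b \<in> B" "b \<notin> S" and SV: "S \<subseteq> A \<union> B"
        using S unfolding Dmn_char[OF AB] by blast
      have SF: "S \<subseteq> A \<union> B - {a, b}" using SV a b by blast
      have "marginal (A \<union> B) d (A \<union> B - {a, b}) e' z = 0" if "e' \<in> PiE (A \<union> B - {a, b}) (\<lambda>v. {1..d v})" for e'
        using codim_two[OF _ a(1) b(1) that] H by blast
      then show "marginal (A \<union> B) d S e z = 0"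
        unfolding marginal_via_superface[OF fV SF Diff_subset] by (intro sum.neutral) simp
    qed (use H in blast)
  qed
qed

lemma sum_1_to_2: "(\<Sum>p\<in>{1..2::nat}. f p) = f 1 + f 2"
  by (simp add: numeral_2_eq_2 atLeastAtMostSuc_conv add.commute)

lemma sum_1_to_3: "(\<Sum>p\<in>{1..3::nat}. f p) = f 1 + f 2 + f 3"
  by (simp add: numeral_3_eq_3 numeral_2_eq_2 atLeastAtMostSuc_conv add.commute add.left_commute)

lemma glue_update_outside: "b \<notin> X \<Longrightarrow> glue X j (i(b := q)) = (glue X j i)(b := q)"
  unfolding override_on_def by (auto simp: fun_eq_iff)

lemma glue_update_inside: "a \<in> X \<Longrightarrow> glue X j (i(a := q)) = glue X j i"
  unfolding override_on_def by (auto simp: fun_eq_iff)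

lemma glue_glue_eq:
  assumes "i \<in> cols_A V d" "j \<in> cols_A V d" "\<forall>v\<in>V - (X \<union> Y). i v = j v"
  shows "glue X j (glue Y j i) = j"
proof
  fix v show "glue X j (glue Y j i) v = j v"
  proof (cases "v \<in> V")
    case False
    then have "i v = undefined" "j v = undefined" using assms(1,2) unfolding cols_A_def by (auto simp: PiE_def extensional_def)
    then show ?thesis unfolding override_on_def by auto
  qed (use assms(3) in \<open>auto simp: override_on_def\<close>)
qed

lemma invariant_under_glue:
  assumes fX: "finite X" and XV: "X \<subseteq> V" and d2: "\<forall>v\<in>X. d v = 2"
    and H: "\<forall>i\<in>cols_A V d. \<forall>a\<in>X. f (i(a := 1)) = f (i(a := 2))"
  shows "i \<in> cols_A V d \<Longrightarrow> j \<in> cols_A V d \<Longrightarrow> f i = f (glue X j i)"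
proof (induction "card {a\<in>X. i a \<noteq> j a}" arbitrary: i rule: less_induct)
  case less
  show ?case
  proof (cases "{a\<in>X. i a \<noteq> j a} = {}")
    case True
    then have "glue X j i = i" unfolding override_on_def by (auto simp: fun_eq_iff)
    then show ?thesis by simp
  next
    case False
    then obtain a where a: "a \<in> X" "i a \<noteq> j a" by blast
    have aV: "a \<in> V" using a XV by blast
    have ia: "i a \<in> {1..2}" and ja: "j a \<in> {1..2}" using less.prems aV d2 a unfolding cols_A_def by force+
    define i' where "i' = i(a := j a)"
    have i'c: "i' \<in> cols_A V d" unfolding i'_def using update_in_cols_A[OF less.prems(1) aV, of "j a"] ja d2 a by simp
    have "f (i(a := p)) = f (i(a := q))" if "p \<in> {1..2}" "q \<in> {1..2}" for p q
    proof -
      have "p = 1 \<or> p = 2" "q = 1 \<or> q = 2" using that by auto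
      moreover have "f (i(a := 1)) = f (i(a := 2))" using H less.prems(1) a by blast
      ultimately show ?thesis by auto
    qed
    from this[OF ia ja] have "f i = f i'" unfolding i'_def by simp
    moreover have "glue X j i' = glue X j i" unfolding i'_def using glue_update_inside[OF a(1)] by simp
    moreover have "card {b\<in>X. i' b \<noteq> j b} < card {b\<in>X. i b \<noteq> j b}"
      using fX a unfolding i'_def by (intro psubset_card_mono) auto
    ultimately show ?thesis using less.hyps[OF _ i'c less.prems(2)] by simp
  qed
qed

definition alt_square :: "(('a \<Rightarrow> nat) \<Rightarrow> int) \<Rightarrow> ('a \<Rightarrow> nat) \<Rightarrow> 'a \<Rightarrow> 'a \<Rightarrow> int" where
  "alt_square w i a b = w (i(a := 1, b := 1)) - w (i(a := 2, b := 1)) - w (i(a := 1, b := 2)) + w (i(a := 2, b := 2))"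

text \<open>If all alternating \<open>2 \<times> 2\<close> sums of \<open>w\<close> in directions \<open>X \<times> Y\<close> vanish, then \<open>w\<close> is additive on
  rectangles: \<open>w\<close> splits as a function of the \<open>X\<close>-coordinates plus one of the \<open>Y\<close>-coordinates.\<close>
lemma rectangle_rule:
  fixes w :: "('a \<Rightarrow> nat) \<Rightarrow> int"
  assumes fV: "finite V" and XV: "X \<subseteq> V" and YV: "Y \<subseteq> V" and XY: "X \<inter> Y = {}"
    and d2: "\<forall>v\<in>X \<union> Y. d v = 2" and squares: "\<forall>i\<in>cols_A V d. \<forall>a\<in>X. \<forall>b\<in>Y. alt_square w i a b = 0"
    and i: "i \<in> cols_A V d" and j: "j \<in> cols_A V d" and agree: "\<forall>v\<in>V - (X \<union> Y). i v = j v"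
  shows "w i + w j = w (glue X j i) + w (glue Y j i)"
proof -
  have fX: "finite X" and fY: "finite Y" using XV YV fV finite_subset by auto
  define \<phi> where "\<phi> = (\<lambda>b i. w (i(b := 1)) - w (i(b := 2)))"
  have \<phi>_glue: "\<phi> b i = \<phi> b (glue X j i)" if b: "b \<in> Y" and i: "i \<in> cols_A V d" for b i
  proof -
    have "\<forall>i\<in>cols_A V d. \<forall>a\<in>X. \<phi> b (i(a := 1)) = \<phi> b (i(a := 2))"
      using squares b unfolding alt_square_def \<phi>_def by fastforce
    then show ?thesis using invariant_under_glue[OF fX XV _ _ i j] d2 by blast
  qed
  define \<Delta> where "\<Delta> = (\<lambda>i. w i - w (glue X j i))"
  have "\<forall>i\<in>cols_A V d. \<forall>b\<in>Y. \<Delta> (i(b := 1)) = \<Delta> (i(b := 2))"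
  proof (intro ballI)
    fix i b assume i: "i \<in> cols_A V d" and b: "b \<in> Y"
    have bX: "b \<notin> X" using b XY by blast
    show "\<Delta> (i(b := 1)) = \<Delta> (i(b := 2))"
      using \<phi>_glue[OF b i] unfolding \<Delta>_def \<phi>_def glue_update_outside[OF bX] by linarith
  qed
  then have "\<Delta> i = \<Delta> (glue Y j i)" using invariant_under_glue[OF fY YV _ _ i j] d2 by blast
  then show ?thesis unfolding \<Delta>_def glue_glue_eq[OF i j agree] by simp
qed

definition level_sign :: "nat \<Rightarrow> int" where
  "level_sign p = (if p = 2 then -1 else 1)"

text \<open>Multiplying by \<open>parity W i\<close> turns the vanishing \<open>2 \<times> 2\<close> sums of kernel vectors into vanishing
  alternating sums.\<close>
definition parity :: "'a set \<Rightarrow> ('a \<Rightarrow> nat) \<Rightarrow> int" where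
  "parity W i = (\<Prod>u\<in>W. level_sign (i u))"

lemma level_sign_simps [simp]: "level_sign 1 = 1" "level_sign (Suc 0) = 1" "level_sign 2 = -1"
  unfolding level_sign_def by simp_all

lemma parity_pm1: "parity W i = 1 \<or> parity W i = -1"
proof (induction W rule: infinite_finite_induct)
  case (insert x F) then show ?case unfolding parity_def level_sign_def by auto
qed (simp_all add: parity_def)

lemma parity_sq: "parity W i * parity W i = 1"
  using parity_pm1[of W i] by auto

lemma parity_nonzero: "parity W i \<noteq> 0"
  using parity_pm1[of W i] by auto

lemma parity_update:
  assumes "finite W" "a \<in> W"
  shows "parity W (i(a := p)) = level_sign p * parity (W - {a}) i"
proof -
  have "parity W (i(a := p)) = level_sign p * (\<Prod>u\<in>W - {a}. level_sign ((i(a := p)) u))"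
    unfolding parity_def using prod.remove[OF assms, of "\<lambda>u. level_sign ((i(a := p)) u)"] by simp
  also have "(\<Prod>u\<in>W - {a}. level_sign ((i(a := p)) u)) = parity (W - {a}) i"
    unfolding parity_def by (intro prod.cong refl) auto
  finally show ?thesis .
qed

lemma parity_update_outside: "a \<notin> W \<Longrightarrow> parity W (i(a := p)) = parity W i"
  unfolding parity_def by (intro prod.cong refl) auto

lemma parity_update2:
  assumes "finite W" "a \<in> W" "b \<in> W" "a \<noteq> b"
  shows "parity W (i(a := p, b := q)) = level_sign p * level_sign q * parity (W - {a, b}) i"
proof -
  have "parity W (i(a := p, b := q)) = level_sign q * parity (W - {b}) (i(a := p))"
    using parity_update[OF assms(1,3)] by simp
  also have "parity (W - {b}) (i(a := p)) = level_sign p * parity (W - {b} - {a}) i"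
    using parity_update[of "W - {b}" a i p] assms by simp
  also have "W - {b} - {a} = W - {a, b}" by auto
  finally show ?thesis by (simp only: mult.assoc mult.left_commute)
qed

section \<open>Two levels on \<open>D\<^sub>m\<^sub>,\<^sub>n\<close>\<close>

lemma two_elements:
  assumes "finite X" "card X \<ge> 2"
  obtains a1 a2 where "a1 \<in> X" "a2 \<in> X" "a1 \<noteq> a2"
proof -
  obtain a1 where a1: "a1 \<in> X" using assms by fastforce
  then have "card (X - {a1}) \<ge> 1" using assms by simp
  then have "X - {a1} \<noteq> {}" by (metis card.empty not_one_le_zero)
  then obtain a2 where "a2 \<in> X - {a1}" by blast
  then show ?thesis using that a1 by blast
qed

lemma rectangle_additive_on_pattern:
  fixes f :: "'a \<Rightarrow> 'b \<Rightarrow> int"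
  assumes R: "\<And>\<alpha> \<beta> \<alpha>' \<beta>'. \<alpha> \<in> X \<Longrightarrow> \<beta> \<in> Y \<Longrightarrow> \<alpha>' \<in> X \<Longrightarrow> \<beta>' \<in> Y \<Longrightarrow> f \<alpha> \<beta> + f \<alpha>' \<beta>' = f \<alpha>' \<beta> + f \<alpha> \<beta>'"
    and Z: "\<And>\<alpha> \<beta>. \<alpha> \<in> X \<Longrightarrow> \<beta> \<in> Y \<Longrightarrow> (\<beta> \<in> S) = (\<alpha> \<in> T) \<Longrightarrow> f \<alpha> \<beta> = 0"
    and at: "\<alpha>t \<in> X" "\<alpha>t \<in> T" and ac: "\<alpha>c \<in> X" "\<alpha>c \<notin> T"
    and bs: "\<beta>s \<in> Y" "\<beta>s \<in> S" and bc: "\<beta>c \<in> Y" "\<beta>c \<notin> S"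
    and a: "\<alpha> \<in> X" and b: "\<beta> \<in> Y"
  shows "f \<alpha> \<beta> = f \<alpha>c \<beta>s * (of_bool (\<beta> \<in> S) - of_bool (\<alpha> \<in> T))"
proof (cases "(\<beta> \<in> S) = (\<alpha> \<in> T)")
  case True then show ?thesis using Z[OF a b] by auto
next
  case False
  show ?thesis
  proof (cases "\<beta> \<in> S")
    case True
    then have "\<alpha> \<notin> T" using False by simp
    have "f \<alpha> \<beta> + f \<alpha>t \<beta>c = f \<alpha>t \<beta> + f \<alpha> \<beta>c" "f \<alpha>c \<beta>s + f \<alpha>t \<beta>c = f \<alpha>t \<beta>s + f \<alpha>c \<beta>c"
      using R a b at ac bs bc by blast+
    moreover have "f \<alpha>t \<beta> = 0" "f \<alpha> \<beta>c = 0" "f \<alpha>t \<beta>s = 0" "f \<alpha>c \<beta>c = 0"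
      using Z True \<open>\<alpha> \<notin> T\<close> a b at ac bs bc by blast+
    ultimately show ?thesis using True \<open>\<alpha> \<notin> T\<close> by simp
  next
    case notS: False
    then have "\<alpha> \<in> T" using False by simp
    have "f \<alpha> \<beta> + f \<alpha>c \<beta>s = f \<alpha>c \<beta> + f \<alpha> \<beta>s" using R a b ac bs by blast
    moreover have "f \<alpha>c \<beta> = 0" "f \<alpha> \<beta>s = 0" using Z notS \<open>\<alpha> \<in> T\<close> a b ac bs by blast+
    ultimately show ?thesis using notS \<open>\<alpha> \<in> T\<close> by simp
  qed
qed

locale Dmn_two_levels =
  fixes A B :: "'a set"
  assumes disjoint: "A \<inter> B = {}" and finite_A: "finite A" and finite_B: "finite B"
begin

abbreviation "d2 \<equiv> (\<lambda>_::'a. 2::nat)"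
abbreviation "K \<equiv> cols_A (A \<union> B) d2"

lemma finite_AB: "finite (A \<union> B)" using finite_A finite_B by simp

lemma Dmn_subset_Pow: "Dmn A B \<subseteq> Pow (A \<union> B)" unfolding Dmn_char[OF disjoint] by auto

lemma A_kernel_two_levels_iff:
  "A_kernel (A \<union> B) (Dmn A B) d2 z \<longleftrightarrow> (\<forall>i. i \<notin> K \<longrightarrow> z i = 0) \<and>
    (\<forall>i\<in>K. \<forall>a\<in>A. \<forall>b\<in>B. alt_square (\<lambda>i. parity (A \<union> B) i * z i) i a b = 0)"
proof -
  have square: "(\<Sum>p\<in>{1..2}. \<Sum>q\<in>{1..2}. z (i(a := p, b := q))) = 0 \<longleftrightarrow>
      alt_square (\<lambda>i. parity (A \<union> B) i * z i) i a b = 0"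
    if "a \<in> A" "b \<in> B" for i a b
  proof -
    have "a \<noteq> b" using that disjoint by blast
    then have "parity (A \<union> B) (i(a := p, b := q)) = level_sign p * level_sign q * parity (A \<union> B - {a, b}) i"
      for p q using parity_update2[OF finite_AB, of a b i] that by simp
    then have "alt_square (\<lambda>i. parity (A \<union> B) i * z i) i a b =
        parity (A \<union> B - {a, b}) i * (\<Sum>p\<in>{1..2}. \<Sum>q\<in>{1..2}. z (i(a := p, b := q)))"
      unfolding alt_square_def sum_1_to_2 by (simp add: algebra_simps)
    then show ?thesis by (simp add: parity_nonzero)
  qed
  have "(\<forall>a\<in>A. \<forall>b\<in>B. \<forall>i\<in>K. (\<Sum>p\<in>{1..2}. \<Sum>q\<in>{1..2}. z (i(a := p, b := q))) = 0) \<longleftrightarrow>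
      (\<forall>i\<in>K. \<forall>a\<in>A. \<forall>b\<in>B. alt_square (\<lambda>i. parity (A \<union> B) i * z i) i a b = 0)"
    using square by blast
  moreover have "\<forall>v\<in>A \<union> B. d2 v \<ge> 1" by simp
  ultimately show ?thesis using A_kernel_Dmn_iff[OF disjoint finite_A finite_B] by simp
qed

lemma glue_glue_left: "glue A (glue A \<alpha>' \<beta>') (glue A \<alpha> \<beta>) = glue A \<alpha>' \<beta>"
  unfolding override_on_def by (auto simp: fun_eq_iff)

lemma glue_glue_right:
  assumes "\<beta> \<in> cols_A B d2" "\<beta>' \<in> cols_A B d2"
  shows "glue B (glue A \<alpha>' \<beta>') (glue A \<alpha> \<beta>) = glue A \<alpha> \<beta>'"
proof
  fix x
  have "x \<notin> B \<Longrightarrow> \<beta> x = \<beta>' x" using assms unfolding cols_A_def by (auto simp: PiE_def extensional_def)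
  then show "glue B (glue A \<alpha>' \<beta>') (glue A \<alpha> \<beta>) x = glue A \<alpha> \<beta>' x"
    unfolding override_on_def using disjoint by auto
qed

definition twisted :: "(('a \<Rightarrow> nat) \<Rightarrow> int) \<Rightarrow> ('a \<Rightarrow> nat) \<Rightarrow> ('a \<Rightarrow> nat) \<Rightarrow> int" where
  "twisted z \<alpha> \<beta> = parity (A \<union> B) (glue A \<alpha> \<beta>) * z (glue A \<alpha> \<beta>)"

lemma twisted_rectangle:
  assumes K: "A_kernel (A \<union> B) (Dmn A B) d2 z"
    and \<alpha>: "\<alpha> \<in> cols_A A d2" "\<alpha>' \<in> cols_A A d2" and \<beta>: "\<beta> \<in> cols_A B d2" "\<beta>' \<in> cols_A B d2"
  shows "twisted z \<alpha> \<beta> + twisted z \<alpha>' \<beta>' = twisted z \<alpha>' \<beta> + twisted z \<alpha> \<beta>'"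
proof -
  have "\<forall>i\<in>K. \<forall>a\<in>A. \<forall>b\<in>B. alt_square (\<lambda>i. parity (A \<union> B) i * z i) i a b = 0"
    using K unfolding A_kernel_two_levels_iff by blast
  from rectangle_rule[OF finite_AB _ _ disjoint _ this glue_in_cols_A[OF \<alpha>(1) \<beta>(1)] glue_in_cols_A[OF \<alpha>(2) \<beta>(2)]]
  show ?thesis unfolding twisted_def glue_glue_left glue_glue_right[OF \<beta>] by auto
qed

definition additive_vec :: "(('a \<Rightarrow> nat) \<Rightarrow> int) \<Rightarrow> (('a \<Rightarrow> nat) \<Rightarrow> int) \<Rightarrow> ('a \<Rightarrow> nat) \<Rightarrow> int" where
  "additive_vec Q P = (\<lambda>i. if i \<in> K then parity (A \<union> B) i * (Q (restrict i A) + P (restrict i B)) else 0)"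

lemma twisted_additive_vec:
  assumes "\<alpha> \<in> cols_A A d2" "\<beta> \<in> cols_A B d2"
  shows "twisted (additive_vec Q P) \<alpha> \<beta> = Q \<alpha> + P \<beta>"
  unfolding twisted_def additive_vec_def
  using glue_in_cols_A[OF assms] restrict_glue_left[OF assms(1)] restrict_glue_right[OF disjoint assms(2)]
  by (simp add: mult.assoc[symmetric] parity_sq)

lemma A_kernel_additive_vec: "A_kernel (A \<union> B) (Dmn A B) d2 (additive_vec Q P)"
  unfolding A_kernel_two_levels_iff
proof (intro conjI allI impI ballI)
  fix i a b assume i: "i \<in> K" and a: "a \<in> A" and b: "b \<in> B"
  have "i(a := p, b := q) \<in> K" if "p \<in> {1..2}" "q \<in> {1..2}" for p q
    using update_in_cols_A[OF update_in_cols_A[OF i] _ that(2)] that(1) a b by auto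
  moreover have "restrict (i(a := p, b := q)) B = restrict (i(b := q)) B"
    "restrict (i(a := p, b := q)) A = restrict (i(a := p)) A" for p q
    using a b disjoint by (auto simp: fun_eq_iff)
  ultimately show "alt_square (\<lambda>i. parity (A \<union> B) i * additive_vec Q P i) i a b = 0"
    unfolding alt_square_def additive_vec_def by (simp add: mult.assoc[symmetric] parity_sq)
qed (simp add: additive_vec_def)

end

lemma distinct_cols_two_levels:
  assumes a: "a1 \<in> X" "a2 \<in> X" "a1 \<noteq> a2"
  obtains c0 c1 c2 c3 where "c0 \<in> cols_A X (\<lambda>_. 2)" "c1 \<in> cols_A X (\<lambda>_. 2)" "c2 \<in> cols_A X (\<lambda>_. 2)"
    "c3 \<in> cols_A X (\<lambda>_. 2)" "c0 \<noteq> c1" "c0 \<noteq> c2" "c0 \<noteq> c3" "c1 \<noteq> c2" "c1 \<noteq> c3" "c2 \<noteq> c3"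
proof -
  define c where "c = restrict (\<lambda>_. 1::nat) X"
  have c: "c \<in> cols_A X (\<lambda>_. 2)" unfolding c_def cols_A_def by auto
  have "c a1 = 1" "c a2 = 1" unfolding c_def using a by auto
  then have "c \<noteq> c(a1 := 2)" "c \<noteq> c(a2 := 2)" "c \<noteq> c(a1 := 2, a2 := 2)" "c(a1 := 2) \<noteq> c(a2 := 2)"
    "c(a1 := 2) \<noteq> c(a1 := 2, a2 := 2)" "c(a2 := 2) \<noteq> c(a1 := 2, a2 := 2)"
    using a(3) by (metis fun_upd_eqD fun_upd_same fun_upd_other numeral_One numeral_eq_iff semiring_norm(85))+
  moreover have "c(a1 := 2) \<in> cols_A X (\<lambda>_. 2)" "c(a2 := 2) \<in> cols_A X (\<lambda>_. 2)"
    "c(a1 := 2, a2 := 2) \<in> cols_A X (\<lambda>_. 2)"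
    using update_in_cols_A c a by (simp_all add: update_in_cols_A)
  ultimately show ?thesis using that c by blast
qed

context Dmn_two_levels begin

lemma twisted_restrict:
  assumes "i \<in> K"
  shows "twisted z (restrict i A) (restrict i B) = parity (A \<union> B) i * z i"
  unfolding twisted_def glue_restrict[OF assms] ..

lemma additive_vec_glue:
  assumes "\<alpha> \<in> cols_A A d2" "\<beta> \<in> cols_A B d2"
  shows "additive_vec Q P (glue A \<alpha> \<beta>) = parity (A \<union> B) (glue A \<alpha> \<beta>) * (Q \<alpha> + P \<beta>)"
  unfolding additive_vec_def
  using glue_in_cols_A[OF assms] restrict_glue_left[OF assms(1)] restrict_glue_right[OF disjoint assms(2)] by simp

lemma restrict_cols_AB:
  assumes "i \<in> K"
  shows "restrict i A \<in> cols_A A d2" "restrict i B \<in> cols_A B d2"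
  using restrict_in_cols_A[OF assms] by auto

lemma twisted_kernel_additive:
  assumes K: "A_kernel (A \<union> B) (Dmn A B) d2 z" and \<alpha>0: "\<alpha>0 \<in> cols_A A d2" and \<beta>0: "\<beta>0 \<in> cols_A B d2"
    and \<alpha>: "\<alpha> \<in> cols_A A d2" and \<beta>: "\<beta> \<in> cols_A B d2"
  shows "twisted z \<alpha> \<beta> = twisted z \<alpha> \<beta>0 + (twisted z \<alpha>0 \<beta> - twisted z \<alpha>0 \<beta>0)"
  using twisted_rectangle[OF K \<alpha> \<alpha>0 \<beta> \<beta>0] by simp

lemma A_pm1_refinable_two_levels: "A_pm1_refinable (A \<union> B) (Dmn A B) d2"
proof (rule A_pm1_refinableI)
  fix z i1 assume K: "A_kernel (A \<union> B) (Dmn A B) d2 z" and zi1: "z i1 \<noteq> 0"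
  have i1: "i1 \<in> K" using A_kernel_outside[OF K] zi1 by blast
  define Q where "Q = (\<lambda>\<alpha>. twisted z \<alpha> (restrict i1 B))"
  define P where "P = (\<lambda>\<beta>. twisted z (restrict i1 A) \<beta> - twisted z (restrict i1 A) (restrict i1 B))"
  have tz: "twisted z (restrict i A) (restrict i B) = Q (restrict i A) + P (restrict i B)" if "i \<in> K" for i
    unfolding P_def Q_def using twisted_kernel_additive[OF K restrict_cols_AB[OF i1] restrict_cols_AB[OF that]] .
  define y where "y = additive_vec (\<lambda>\<alpha>. - of_bool (Q \<alpha> = 0)) (\<lambda>\<beta>. of_bool (P \<beta> = 0))"
  have ty: "parity (A \<union> B) i * y i = of_bool (P (restrict i B) = 0) - of_bool (Q (restrict i A) = 0)" if "i \<in> K" for i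
    using twisted_additive_vec[OF restrict_cols_AB[OF that], of _ _ ] twisted_restrict[OF that, of y]
    unfolding y_def by simp
  have "y i1 \<noteq> 0"
    using ty[OF i1] tz[OF i1] twisted_restrict[OF i1, of z] zi1 unfolding P_def by (auto simp: parity_nonzero)
  moreover have "\<forall>i. y i \<in> {-1,0,1}" unfolding y_def additive_vec_def using parity_pm1 by auto
  moreover have "supp_within y z"
  proof (intro allI impI)
    fix i assume yi: "y i \<noteq> 0"
    then have i: "i \<in> K" unfolding y_def additive_vec_def by (simp split: if_splits)
    have "P (restrict i B) + Q (restrict i A) \<noteq> 0"
    proof
      assume "P (restrict i B) + Q (restrict i A) = 0"
      then have "(P (restrict i B) = 0) = (Q (restrict i A) = 0)" by auto
      then have "parity (A \<union> B) i * y i = 0" using ty[OF i] by simp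
      then show False using yi by (simp add: parity_nonzero)
    qed
    then show "z i \<noteq> 0" using tz[OF i] twisted_restrict[OF i, of z] by auto
  qed
  ultimately show "\<exists>y. pm1_refinement (A \<union> B) (Dmn A B) d2 y z"
    using A_kernel_additive_vec unfolding y_def by blast
qed


definition pattern_vec :: "('a \<Rightarrow> nat) set \<Rightarrow> ('a \<Rightarrow> nat) set \<Rightarrow> ('a \<Rightarrow> nat) \<Rightarrow> int" where
  "pattern_vec S T = additive_vec (\<lambda>\<alpha>. - of_bool (\<alpha> \<in> T)) (\<lambda>\<beta>. of_bool (\<beta> \<in> S))"

lemma pattern_vec_glue:
  assumes "\<alpha> \<in> cols_A A d2" "\<beta> \<in> cols_A B d2"
  shows "pattern_vec S T (glue A \<alpha> \<beta>) = parity (A \<union> B) (glue A \<alpha> \<beta>) * (of_bool (\<beta> \<in> S) - of_bool (\<alpha> \<in> T))"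
  unfolding pattern_vec_def additive_vec_glue[OF assms] by simp

lemma pattern_vec_pm1: "pattern_vec S T i \<in> {-1,0,1}"
  unfolding pattern_vec_def additive_vec_def using parity_pm1[of "A \<union> B" i] by auto

lemma rigid_pattern_vec:
  assumes at: "\<alpha>t \<in> cols_A A d2" "\<alpha>t \<in> T" and ac: "\<alpha>c \<in> cols_A A d2" "\<alpha>c \<notin> T"
    and bs: "\<beta>s \<in> cols_A B d2" "\<beta>s \<in> S" and bc: "\<beta>c \<in> cols_A B d2" "\<beta>c \<notin> S"
  shows "rigid (A \<union> B) (Dmn A B) d2 (pattern_vec S T)"
  unfolding rigid_def
proof (intro allI impI)
  fix w assume H: "A_kernel (A \<union> B) (Dmn A B) d2 w \<and> supp_within w (pattern_vec S T)"
  define c where "c = twisted w \<alpha>c \<beta>s"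
  have tw: "twisted w \<alpha> \<beta> = c * (of_bool (\<beta> \<in> S) - of_bool (\<alpha> \<in> T))"
    if "\<alpha> \<in> cols_A A d2" "\<beta> \<in> cols_A B d2" for \<alpha> \<beta>
    unfolding c_def
  proof (rule rectangle_additive_on_pattern[OF _ _ at ac bs bc that])
    show "twisted w \<alpha> \<beta> = 0" if "\<alpha> \<in> cols_A A d2" "\<beta> \<in> cols_A B d2" "(\<beta> \<in> S) = (\<alpha> \<in> T)" for \<alpha> \<beta>
      using H pattern_vec_glue[OF that(1,2)] that(3) unfolding twisted_def by auto
  qed (use twisted_rectangle H in blast)
  then have "parity (A \<union> B) i * w i = parity (A \<union> B) i * (c * pattern_vec S T i)" if i: "i \<in> K" for i
  proof -
    let ?D = "of_bool (restrict i B \<in> S) - of_bool (restrict i A \<in> T)"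
    have "parity (A \<union> B) i * w i = twisted w (restrict i A) (restrict i B)" using twisted_restrict[OF i] by simp
    also have "\<dots> = c * ?D" using tw[OF restrict_cols_AB[OF i]] .
    also have "\<dots> = (parity (A \<union> B) i * parity (A \<union> B) i) * (c * ?D)" by (simp add: parity_sq)
    also have "\<dots> = parity (A \<union> B) i * (c * (parity (A \<union> B) i * ?D))" by (simp add: algebra_simps)
    also have "parity (A \<union> B) i * ?D = pattern_vec S T i"
      using pattern_vec_glue[OF restrict_cols_AB[OF i]] glue_restrict[OF i] by simp
    finally show ?thesis .
  qed
  then have "w i = c * pattern_vec S T i" for i
    using A_kernel_outside[OF conjunct1[OF H], of i] by (cases "i \<in> K") (simp_all add: parity_nonzero pattern_vec_def additive_vec_def)
  then show "\<exists>c. \<forall>i. w i = c * pattern_vec S T i" by blast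
qed

lemma rigid_pair_two_levels:
  assumes cA: "card A \<ge> 2" and cB: "card B \<ge> 2"
  shows "rigid_pair (A \<union> B) (Dmn A B) d2"
proof -
  obtain a1 a2 where "a1 \<in> A" "a2 \<in> A" "a1 \<noteq> a2" using two_elements[OF finite_A cA] by blast
  then obtain \<alpha>1 \<alpha>2 \<alpha>3 \<alpha>4 :: "'a \<Rightarrow> nat" where \<alpha>: "\<alpha>1 \<in> cols_A A d2" "\<alpha>2 \<in> cols_A A d2" "\<alpha>3 \<in> cols_A A d2"
    and \<alpha>d: "\<alpha>1 \<noteq> \<alpha>2" "\<alpha>1 \<noteq> \<alpha>3" "\<alpha>2 \<noteq> \<alpha>3" by (rule distinct_cols_two_levels)
  obtain b1 b2 where "b1 \<in> B" "b2 \<in> B" "b1 \<noteq> b2" using two_elements[OF finite_B cB] by blast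
  then obtain \<beta>1 \<beta>2 \<beta>3 \<beta>4 :: "'a \<Rightarrow> nat" where \<beta>: "\<beta>1 \<in> cols_A B d2" "\<beta>2 \<in> cols_A B d2" "\<beta>3 \<in> cols_A B d2"
    and \<beta>d: "\<beta>1 \<noteq> \<beta>2" "\<beta>1 \<noteq> \<beta>3" "\<beta>2 \<noteq> \<beta>3" by (rule distinct_cols_two_levels)
  define x where "x = pattern_vec {\<beta>1, \<beta>2} {\<alpha>1}"
  define y where "y = pattern_vec {\<beta>1} {\<alpha>1, \<alpha>2}"
  have "rigid (A \<union> B) (Dmn A B) d2 x" unfolding x_def
    by (rule rigid_pattern_vec[of \<alpha>1 _ \<alpha>2 \<beta>1 _ \<beta>3]) (use \<alpha> \<alpha>d \<beta> \<beta>d in auto)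
  moreover have "rigid (A \<union> B) (Dmn A B) d2 y" unfolding y_def
    by (rule rigid_pattern_vec[of \<alpha>1 _ \<alpha>3 \<beta>1 _ \<beta>2]) (use \<alpha> \<alpha>d \<beta> \<beta>d in auto)
  moreover have "x (glue A \<alpha>3 \<beta>1) = y (glue A \<alpha>3 \<beta>1) \<and> x (glue A \<alpha>3 \<beta>1) \<noteq> 0"
    unfolding x_def y_def pattern_vec_glue[OF \<alpha>(3) \<beta>(1)] using \<alpha>d \<beta>d by (auto simp: parity_nonzero)
  moreover have "x (glue A \<alpha>2 \<beta>2) = - y (glue A \<alpha>2 \<beta>2) \<and> x (glue A \<alpha>2 \<beta>2) \<noteq> 0"
    unfolding x_def y_def pattern_vec_glue[OF \<alpha>(2) \<beta>(2)] using \<alpha>d \<beta>d by (auto simp: parity_nonzero)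
  moreover have "A_kernel (A \<union> B) (Dmn A B) d2 x" "A_kernel (A \<union> B) (Dmn A B) d2 y"
    unfolding x_def y_def pattern_vec_def by (rule A_kernel_additive_vec)+
  moreover have "\<forall>i. x i \<in> {-1,0,1}" "\<forall>i. y i \<in> {-1,0,1}" unfolding x_def y_def using pattern_vec_pm1 by blast+
  ultimately show ?thesis unfolding rigid_pair_def by blast
qed

end

section \<open>Three levels at one vertex of \<open>D\<^sub>m\<^sub>,\<^sub>n\<close>\<close>

text \<open>The coefficients of the kernel vector witnessing that three levels at a vertex of \<open>D\<^sub>m\<^sub>,\<^sub>n\<close>
  destroy unimodularity: at level \<open>k\<close> and column \<open>(\<alpha>, \<beta>)\<close> its twisted entry is
  \<open>ternary_H k \<alpha> + ternary_G k \<beta>\<close>; the level sums of \<open>ternary_G\<close> vanish.\<close>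
definition ternary_H :: "'x \<Rightarrow> nat \<Rightarrow> 'x \<Rightarrow> int" where
  "ternary_H \<alpha>0 k \<alpha> = (if k = 3 then - of_bool (\<alpha> \<noteq> \<alpha>0) else of_bool (\<alpha> = \<alpha>0))"

definition ternary_G :: "'y \<Rightarrow> 'y \<Rightarrow> 'y \<Rightarrow> nat \<Rightarrow> 'y \<Rightarrow> int" where
  "ternary_G p1 q r k \<beta> = (if k = 1 then - of_bool (\<beta> = p1) - of_bool (\<beta> = q)
     else if k = 2 then - of_bool (\<beta> = p1) - of_bool (\<beta> = r)
     else 2 * of_bool (\<beta> = p1) + of_bool (\<beta> = q) + of_bool (\<beta> = r))"

lemma ternary_G_level_sum: "ternary_G p1 q r 1 \<beta> + ternary_G p1 q r 2 \<beta> + ternary_G p1 q r 3 \<beta> = 0"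
  unfolding ternary_G_def by simp

text \<open>Functions of a level \<open>k \<in> {1,2,3}\<close> and a column \<open>(\<alpha>, \<beta>)\<close> that are additive on rectangles
  for each level, whose level sums do not depend on \<open>\<beta>\<close>, and which vanish wherever the
  counterexample does.  The locale shows that they vanish identically.\<close>
locale ternary_rectangle_system =
  fixes f :: "nat \<Rightarrow> 'x \<Rightarrow> 'y \<Rightarrow> int" and X :: "'x set" and Y :: "'y set"
    and \<alpha>0 \<alpha>1 :: 'x and p0 p1 q r :: 'y
  assumes in_X: "\<alpha>0 \<in> X" "\<alpha>1 \<in> X" "\<alpha>1 \<noteq> \<alpha>0"
    and in_Y: "p0 \<in> Y" "p1 \<in> Y" "q \<in> Y" "r \<in> Y"
    and distinct_Y: "p0 \<noteq> p1" "p0 \<noteq> q" "p0 \<noteq> r" "p1 \<noteq> q" "p1 \<noteq> r" "q \<noteq> r"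
    and rect: "\<And>k \<alpha> \<beta> \<alpha>' \<beta>'. k \<in> {1..3} \<Longrightarrow> \<alpha> \<in> X \<Longrightarrow> \<beta> \<in> Y \<Longrightarrow> \<alpha>' \<in> X \<Longrightarrow> \<beta>' \<in> Y \<Longrightarrow>
       f k \<alpha> \<beta> + f k \<alpha>' \<beta>' = f k \<alpha>' \<beta> + f k \<alpha> \<beta>'"
    and level_sum: "\<And>\<alpha> \<beta> \<beta>'. \<alpha> \<in> X \<Longrightarrow> \<beta> \<in> Y \<Longrightarrow> \<beta>' \<in> Y \<Longrightarrow>
       f 1 \<alpha> \<beta> + f 2 \<alpha> \<beta> + f 3 \<alpha> \<beta> = f 1 \<alpha> \<beta>' + f 2 \<alpha> \<beta>' + f 3 \<alpha> \<beta>'"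
    and zero: "\<And>k \<alpha> \<beta>. k \<in> {1..3} \<Longrightarrow> \<alpha> \<in> X \<Longrightarrow> \<beta> \<in> Y \<Longrightarrow>
       ternary_H \<alpha>0 k \<alpha> + ternary_G p1 q r k \<beta> = 0 \<Longrightarrow> f k \<alpha> \<beta> = 0"
    and pm1: "f 3 \<alpha>0 p1 \<in> {-1,0,1}"
begin

lemma levels_1_2_3: "(1::nat) \<in> {1..3}" "(2::nat) \<in> {1..3}" "(3::nat) \<in> {1..3}" by auto

lemma zeros_level1:
  "f 1 \<alpha>0 p1 = 0" "f 1 \<alpha>0 q = 0"
  "\<alpha> \<in> X \<Longrightarrow> \<alpha> \<noteq> \<alpha>0 \<Longrightarrow> \<beta> \<in> Y \<Longrightarrow> \<beta> \<noteq> p1 \<Longrightarrow> \<beta> \<noteq> q \<Longrightarrow> f 1 \<alpha> \<beta> = 0"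
  using zero[OF levels_1_2_3(1)] in_X in_Y distinct_Y by (auto simp: ternary_H_def ternary_G_def)

lemma zeros_level2:
  "f 2 \<alpha>0 p1 = 0" "f 2 \<alpha>0 r = 0"
  "\<alpha> \<in> X \<Longrightarrow> \<alpha> \<noteq> \<alpha>0 \<Longrightarrow> \<beta> \<in> Y \<Longrightarrow> \<beta> \<noteq> p1 \<Longrightarrow> \<beta> \<noteq> r \<Longrightarrow> f 2 \<alpha> \<beta> = 0"
  using zero[OF levels_1_2_3(2)] in_X in_Y distinct_Y by (auto simp: ternary_H_def ternary_G_def)

lemma zeros_level3:
  "\<beta> \<in> Y \<Longrightarrow> \<beta> \<noteq> p1 \<Longrightarrow> \<beta> \<noteq> q \<Longrightarrow> \<beta> \<noteq> r \<Longrightarrow> f 3 \<alpha>0 \<beta> = 0"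
  "\<alpha> \<in> X \<Longrightarrow> \<alpha> \<noteq> \<alpha>0 \<Longrightarrow> f 3 \<alpha> q = 0" "\<alpha> \<in> X \<Longrightarrow> \<alpha> \<noteq> \<alpha>0 \<Longrightarrow> f 3 \<alpha> r = 0"
  using zero[OF levels_1_2_3(3)] in_X in_Y distinct_Y by (auto simp: ternary_H_def ternary_G_def)

text \<open>Writing \<open>\<lambda>, \<mu>, \<nu>, \<pi>\<close> for the values at \<open>(1, \<alpha>0, p0)\<close>, \<open>(2, \<alpha>0, p0)\<close>, \<open>(3, \<alpha>0, q)\<close>,
  \<open>(3, \<alpha>0, p1)\<close>, the level sums give \<open>\<lambda> + \<mu> = \<mu> + \<nu> = \<lambda> + \<nu> = \<pi>\<close>, so \<open>\<pi> = 2\<lambda>\<close>;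
  as \<open>\<pi> \<in> {-1,0,1}\<close>, all four vanish.\<close>
lemma corner_values:
  "f 1 \<alpha>0 p0 = 0" "f 2 \<alpha>0 p0 = 0" "f 3 \<alpha>0 q = 0" "f 3 \<alpha>0 p1 = 0"
  "f 1 \<alpha>1 p1 = 0" "f 2 \<alpha>1 p1 = 0" "f 3 \<alpha>0 r = 0"
proof -
  note Z1 = zeros_level1 and Z2 = zeros_level2 and Z3 = zeros_level3
  have i: "f 1 \<alpha>1 p1 = - f 1 \<alpha>0 p0"
    using rect[OF levels_1_2_3(1) in_X(1) in_Y(1) in_X(2) in_Y(2)] Z1(1) Z1(3)[OF in_X(2,3) in_Y(1)] distinct_Y by simp
  have ii: "f 1 \<alpha>0 r = f 1 \<alpha>0 p0"
    using rect[OF levels_1_2_3(1) in_X(1) in_Y(4) in_X(2) in_Y(2)] Z1(1) Z1(3)[OF in_X(2,3) in_Y(4)] distinct_Y i by simp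
  have iii: "f 2 \<alpha>1 p1 = - f 2 \<alpha>0 p0"
    using rect[OF levels_1_2_3(2) in_X(1) in_Y(1) in_X(2) in_Y(2)] Z2(1) Z2(3)[OF in_X(2,3) in_Y(1)] distinct_Y by simp
  have iv: "f 2 \<alpha>0 q = f 2 \<alpha>0 p0"
    using rect[OF levels_1_2_3(2) in_X(1) in_Y(3) in_X(2) in_Y(2)] Z2(1) Z2(3)[OF in_X(2,3) in_Y(3)] distinct_Y iii by simp
  have v: "f 3 \<alpha>0 r = f 3 \<alpha>0 q"
    using rect[OF levels_1_2_3(3) in_X(1) in_Y(4) in_X(2) in_Y(3)] Z3(2,3)[OF in_X(2,3)] by simp
  have s1: "f 1 \<alpha>0 p0 + f 2 \<alpha>0 p0 = f 2 \<alpha>0 p0 + f 3 \<alpha>0 q"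
    using level_sum[OF in_X(1) in_Y(1) in_Y(3)] Z3(1)[OF in_Y(1)] Z1(2) iv distinct_Y by simp
  have s2: "f 1 \<alpha>0 p0 + f 2 \<alpha>0 p0 = f 1 \<alpha>0 p0 + f 3 \<alpha>0 q"
    using level_sum[OF in_X(1) in_Y(1) in_Y(4)] Z3(1)[OF in_Y(1)] Z2(2) ii v distinct_Y by simp
  have s3: "f 1 \<alpha>0 p0 + f 2 \<alpha>0 p0 = f 3 \<alpha>0 p1"
    using level_sum[OF in_X(1) in_Y(1) in_Y(2)] Z3(1)[OF in_Y(1)] Z1(1) Z2(1) distinct_Y by simp
  have "f 1 \<alpha>0 p0 = 0" using s1 s2 s3 pm1 by auto
  then show "f 1 \<alpha>0 p0 = 0" "f 2 \<alpha>0 p0 = 0" "f 3 \<alpha>0 q = 0" "f 3 \<alpha>0 p1 = 0"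
    "f 1 \<alpha>1 p1 = 0" "f 2 \<alpha>1 p1 = 0" "f 3 \<alpha>0 r = 0"
    using s1 s2 s3 i iii v by auto
qed

lemma level1_vanishes:
  assumes a: "\<alpha> \<in> X" and b: "\<beta> \<in> Y"
  shows "f 1 \<alpha> \<beta> = 0"
proof (cases "\<beta> = p1 \<or> \<beta> = q")
  case True
  then have "f 1 \<alpha>0 \<beta> = 0" using zeros_level1 by auto
  moreover have "f 1 \<alpha> p0 = 0" if "\<alpha> \<noteq> \<alpha>0" using zeros_level1(3)[OF a that in_Y(1)] distinct_Y by simp
  ultimately show ?thesis
    using rect[OF levels_1_2_3(1) a b in_X(1) in_Y(1)] corner_values(1) by (cases "\<alpha> = \<alpha>0") auto
next
  case False
  moreover have "f 1 \<alpha>0 \<beta> = 0"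
    using rect[OF levels_1_2_3(1) in_X(1) b in_X(2) in_Y(2)] zeros_level1(1) zeros_level1(3)[OF in_X(2,3) b]
      corner_values(5) False by simp
  ultimately show ?thesis using zeros_level1(3)[OF a _ b] by (cases "\<alpha> = \<alpha>0") auto
qed

lemma level2_vanishes:
  assumes a: "\<alpha> \<in> X" and b: "\<beta> \<in> Y"
  shows "f 2 \<alpha> \<beta> = 0"
proof (cases "\<beta> = p1 \<or> \<beta> = r")
  case True
  then have "f 2 \<alpha>0 \<beta> = 0" using zeros_level2 by auto
  moreover have "f 2 \<alpha> p0 = 0" if "\<alpha> \<noteq> \<alpha>0" using zeros_level2(3)[OF a that in_Y(1)] distinct_Y by simp
  ultimately show ?thesis
    using rect[OF levels_1_2_3(2) a b in_X(1) in_Y(1)] corner_values(2) by (cases "\<alpha> = \<alpha>0") auto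
next
  case False
  moreover have "f 2 \<alpha>0 \<beta> = 0"
    using rect[OF levels_1_2_3(2) in_X(1) b in_X(2) in_Y(2)] zeros_level2(1) zeros_level2(3)[OF in_X(2,3) b]
      corner_values(6) False by simp
  ultimately show ?thesis using zeros_level2(3)[OF a _ b] by (cases "\<alpha> = \<alpha>0") auto
qed

lemma level3_vanishes:
  assumes a: "\<alpha> \<in> X" and b: "\<beta> \<in> Y"
  shows "f 3 \<alpha> \<beta> = 0"
proof -
  have "f 3 \<alpha>0 \<beta> = 0" using zeros_level3(1)[OF b] corner_values(3,4,7) by (cases "\<beta> = p1 \<or> \<beta> = q \<or> \<beta> = r") auto
  moreover have "f 3 \<alpha> q = 0" using zeros_level3(2)[OF a] corner_values(3) by (cases "\<alpha> = \<alpha>0") auto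
  ultimately show ?thesis using rect[OF levels_1_2_3(3) a b in_X(1) in_Y(3)] corner_values(3) by simp
qed

lemma vanishes: "k \<in> {1..3} \<Longrightarrow> \<alpha> \<in> X \<Longrightarrow> \<beta> \<in> Y \<Longrightarrow> f k \<alpha> \<beta> = 0"
  using level1_vanishes level2_vanishes level3_vanishes by (auto simp: le_Suc_eq numeral_3_eq_3 numeral_2_eq_2)

end

locale Dmn_three_levels = Dmn_two_levels +
  fixes v :: 'a
  assumes v_in_A: "v \<in> A"
begin

abbreviation "A' \<equiv> A - {v}"
abbreviation "d3 \<equiv> (\<lambda>u::'a. if u = v then 3 else 2::nat)"
abbreviation "K3 \<equiv> cols_A (A \<union> B) d3"
abbreviation "W0 \<equiv> A \<union> B - {v}"

definition level_col :: "nat \<Rightarrow> ('a \<Rightarrow> nat) \<Rightarrow> ('a \<Rightarrow> nat) \<Rightarrow> ('a \<Rightarrow> nat)" where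
  "level_col k \<alpha> \<beta> = (\<lambda>u. if u = v then k else if u \<in> A' then \<alpha> u else \<beta> u)"

lemma v_notin_B: "v \<notin> B" using v_in_A disjoint by blast

lemma cols_A'_three_levels: "cols_A A' d3 = cols_A A' d2"
  by (rule cols_A_cong) auto

lemma cols_B_three_levels: "cols_A B d3 = cols_A B d2"
  by (rule cols_A_cong) (use v_notin_B in auto)

lemma level_col_in_cols:
  assumes k: "k \<in> {1..3}" and a: "\<alpha> \<in> cols_A A' d2" and b: "\<beta> \<in> cols_A B d2"
  shows "level_col k \<alpha> \<beta> \<in> K3"
  using k a b v_in_A v_notin_B unfolding level_col_def cols_A_def by (auto simp: PiE_def Pi_def extensional_def)

lemma level_col_v: "level_col k \<alpha> \<beta> v = k" unfolding level_col_def by simp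

lemma restrict_level_col_A': "\<alpha> \<in> cols_A A' d2 \<Longrightarrow> restrict (level_col k \<alpha> \<beta>) A' = \<alpha>"
  unfolding level_col_def cols_A_def by (auto simp: fun_eq_iff PiE_def extensional_def)

lemma restrict_level_col_B: "\<beta> \<in> cols_A B d2 \<Longrightarrow> restrict (level_col k \<alpha> \<beta>) B = \<beta>"
  unfolding level_col_def cols_A_def using disjoint v_notin_B by (auto simp: fun_eq_iff PiE_def extensional_def)

lemma level_col_parts:
  assumes i: "i \<in> K3"
  shows "i v \<in> {1..3}" "restrict i A' \<in> cols_A A' d2" "restrict i B \<in> cols_A B d2"
    "level_col (i v) (restrict i A') (restrict i B) = i"
proof -
  show "i v \<in> {1..3}" using i v_in_A unfolding cols_A_def by force
  have "restrict i A' \<in> cols_A A' d3" using i unfolding cols_A_def by auto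
  thus "restrict i A' \<in> cols_A A' d2" using cols_A'_three_levels by simp
  have "restrict i B \<in> cols_A B d3" using i unfolding cols_A_def by auto
  thus "restrict i B \<in> cols_A B d2" using cols_B_three_levels by simp
  have ie: "\<And>x. x \<notin> A \<union> B \<Longrightarrow> i x = undefined" using i unfolding cols_A_def by (auto simp: PiE_def extensional_def)
  show "level_col (i v) (restrict i A') (restrict i B) = i"
  proof
    fix x show "level_col (i v) (restrict i A') (restrict i B) x = i x"
      unfolding level_col_def using ie by auto
  qed
qed

lemma level_col_update_v: "(level_col k \<alpha> \<beta>)(v := p) = level_col p \<alpha> \<beta>"
  unfolding level_col_def by (auto simp: fun_eq_iff)

lemma glue_level_col_A': "glue A' (level_col k \<alpha>' \<beta>') (level_col k \<alpha> \<beta>) = level_col k \<alpha>' \<beta>"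
  unfolding override_on_def level_col_def by (auto simp: fun_eq_iff)

lemma glue_level_col_B:
  assumes "\<beta> \<in> cols_A B d2" "\<beta>' \<in> cols_A B d2"
  shows "glue B (level_col k \<alpha>' \<beta>') (level_col k \<alpha> \<beta>) = level_col k \<alpha> \<beta>'"
proof
  fix x
  have e: "x \<notin> B \<Longrightarrow> \<beta> x = \<beta>' x" using assms unfolding cols_A_def by (auto simp: PiE_def extensional_def)
  show "glue B (level_col k \<alpha>' \<beta>') (level_col k \<alpha> \<beta>) x = level_col k \<alpha> \<beta>' x"
    unfolding override_on_def level_col_def using disjoint v_notin_B e by auto
qed

lemma three_levels_positive: "\<forall>u\<in>A \<union> B. d3 u \<ge> 1" by simp

lemma finite_W0: "finite W0" using finite_AB by simp

lemma parity_W0_update2: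
  assumes a: "a \<in> A'" and b: "b \<in> B"
  shows "parity W0 (i(a := p, b := q)) = level_sign p * level_sign q * parity (W0 - {a, b}) i"
proof -
  have "a \<noteq> b" using a b disjoint by blast
  thus ?thesis using parity_update2[OF finite_W0, of a b i p q] a b v_notin_B by auto
qed

lemma parity_W0_update_v:
  assumes b: "b \<in> B"
  shows "parity W0 (i(v := p, b := q)) = level_sign q * parity (W0 - {b}) i"
proof -
  have bv: "b \<noteq> v" using b v_notin_B by blast
  have "i(v := p, b := q) = (i(b := q))(v := p)" using bv by (simp add: fun_upd_twist)
  hence "parity W0 (i(v := p, b := q)) = parity W0 (i(b := q))" using parity_update_outside[of v W0] by simp
  also have "\<dots> = level_sign q * parity (W0 - {b}) i" using parity_update[OF finite_W0, of b i q] b bv by simp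
  finally show ?thesis .
qed

definition level_additive_vec :: "(nat \<Rightarrow> ('a \<Rightarrow> nat) \<Rightarrow> int) \<Rightarrow> (nat \<Rightarrow> ('a \<Rightarrow> nat) \<Rightarrow> int) \<Rightarrow> ('a \<Rightarrow> nat) \<Rightarrow> int" where
  "level_additive_vec H G = (\<lambda>i. if i \<in> K3 then parity W0 i * (H (i v) (restrict i A') + G (i v) (restrict i B)) else 0)"

lemma square_sum_level_additive_vec:
  assumes a: "a \<in> A'" and b: "b \<in> B" and i: "i \<in> K3"
  shows "(\<Sum>p\<in>{1..2}. \<Sum>q\<in>{1..2}. level_additive_vec H G (i(a := p, b := q))) = 0"
proof -
  have bv: "b \<noteq> v" using b v_notin_B by blast
  define r where "r = parity (W0 - {a, b}) i"
  have "level_additive_vec H G (i(a := p, b := q)) =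
      level_sign p * level_sign q * r * (H (i v) (restrict (i(a := p)) A') + G (i v) (restrict (i(b := q)) B))"
    if "p \<in> {1..2}" "q \<in> {1..2}" for p q
  proof -
    have "i(a := p, b := q) \<in> K3" using update_in_cols_A[OF update_in_cols_A[OF i]] that a b bv by auto
    moreover have "restrict (i(a := p, b := q)) A' = restrict (i(a := p)) A'"
      "restrict (i(a := p, b := q)) B = restrict (i(b := q)) B"
      using a b disjoint by (auto simp: fun_eq_iff)
    moreover have "(i(a := p, b := q)) v = i v" using a bv by auto
    ultimately show ?thesis
      unfolding level_additive_vec_def r_def using parity_W0_update2[OF a b] by simp
  qed
  then show ?thesis unfolding sum_1_to_2 by (simp add: algebra_simps)
qed

lemma level_sum_level_additive_vec:
  assumes G0: "\<And>\<beta>. G 1 \<beta> + G 2 \<beta> + G 3 \<beta> = 0" and b: "b \<in> B" and i: "i \<in> K3"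
  shows "(\<Sum>p\<in>{1..3}. \<Sum>q\<in>{1..2}. level_additive_vec H G (i(v := p, b := q))) = 0"
proof -
  have bv: "b \<noteq> v" using b v_notin_B by blast
  define r where "r = parity (W0 - {b}) i"
  have "level_additive_vec H G (i(v := p, b := q)) = level_sign q * r * (H p (restrict i A') + G p (restrict (i(b := q)) B))"
    if "p \<in> {1..3}" "q \<in> {1..2}" for p q
  proof -
    have "i(v := p, b := q) \<in> K3" using update_in_cols_A[OF update_in_cols_A[OF i]] that v_in_A b bv by auto
    moreover have "restrict (i(v := p, b := q)) A' = restrict i A'" "restrict (i(v := p, b := q)) B = restrict (i(b := q)) B"
      using b bv disjoint v_in_A by (auto simp: fun_eq_iff)
    ultimately show ?thesis
      unfolding level_additive_vec_def r_def using parity_W0_update_v[OF b] bv by simp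
  qed
  then have "(\<Sum>p\<in>{1..3}. \<Sum>q\<in>{1..2}. level_additive_vec H G (i(v := p, b := q))) =
      r * ((G 1 (restrict (i(b := 1)) B) + G 2 (restrict (i(b := 1)) B) + G 3 (restrict (i(b := 1)) B))
         - (G 1 (restrict (i(b := 2)) B) + G 2 (restrict (i(b := 2)) B) + G 3 (restrict (i(b := 2)) B)))"
    unfolding sum_1_to_3 sum_1_to_2 by (simp add: algebra_simps)
  then show ?thesis using G0 by simp
qed

lemma A_kernel_level_additive_vec:
  assumes G0: "\<And>\<beta>. G 1 \<beta> + G 2 \<beta> + G 3 \<beta> = 0"
  shows "A_kernel (A \<union> B) (Dmn A B) d3 (level_additive_vec H G)"
  unfolding A_kernel_Dmn_iff[OF disjoint finite_A finite_B three_levels_positive]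
proof (intro conjI allI impI ballI)
  fix a b i assume a: "a \<in> A" and b: "b \<in> B" and i: "i \<in> K3"
  have "b \<noteq> v" using b v_notin_B by blast
  then show "(\<Sum>p\<in>{1..d3 a}. \<Sum>q\<in>{1..d3 b}. level_additive_vec H G (i(a := p, b := q))) = 0"
    using square_sum_level_additive_vec[OF _ b i, of a] level_sum_level_additive_vec[where G = G and H = H, OF G0 b i] a
    by (cases "a = v") auto
qed (simp add: level_additive_vec_def)

lemma three_levels_alt_square:
  assumes K: "A_kernel (A \<union> B) (Dmn A B) d3 y" and i: "i \<in> K3" and a: "a \<in> A'" and b: "b \<in> B"
  shows "alt_square (\<lambda>i. parity W0 i * y i) i a b = 0"
proof -
  have aA: "a \<in> A" using a by simp
  have av: "a \<noteq> v" and bv: "b \<noteq> v" using a b v_notin_B by auto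
  have d: "d3 a = 2" "d3 b = 2" using av bv by auto
  have S0: "(\<Sum>p\<in>{1..d3 a}. \<Sum>q\<in>{1..d3 b}. y (i(a := p, b := q))) = 0"
    using K aA b i unfolding A_kernel_Dmn_iff[OF disjoint finite_A finite_B three_levels_positive] by blast
  have S: "(\<Sum>p\<in>{1..2::nat}. \<Sum>q\<in>{1..2::nat}. y (i(a := p, b := q))) = 0"
    using S0 av bv by simp
  define r where "r = parity (W0 - {a, b}) i"
  have sgp: "\<And>p q. parity W0 (i(a := p, b := q)) = level_sign p * level_sign q * r" unfolding r_def using parity_W0_update2[OF a b] by simp
  have "alt_square (\<lambda>i. parity W0 i * y i) i a b = r * (\<Sum>p\<in>{1..2::nat}. \<Sum>q\<in>{1..2::nat}. y (i(a := p, b := q)))"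
    unfolding alt_square_def sum_1_to_2 sgp level_sign_simps by (simp add: algebra_simps)
  thus ?thesis using S by simp
qed

lemma three_levels_v_sum:
  assumes K: "A_kernel (A \<union> B) (Dmn A B) d3 y" and i: "i \<in> K3" and b: "b \<in> B"
  shows "(\<Sum>p\<in>{1..3::nat}. parity W0 (i(v := p, b := 1)) * y (i(v := p, b := 1))) =
         (\<Sum>p\<in>{1..3::nat}. parity W0 (i(v := p, b := 2)) * y (i(v := p, b := 2)))"
proof -
  have bv: "b \<noteq> v" using b v_notin_B by auto
  have d: "d3 v = 3" "d3 b = 2" using bv by auto
  have S0: "(\<Sum>p\<in>{1..d3 v}. \<Sum>q\<in>{1..d3 b}. y (i(v := p, b := q))) = 0"
    using K v_in_A b i unfolding A_kernel_Dmn_iff[OF disjoint finite_A finite_B three_levels_positive] by blast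
  have S: "(\<Sum>p\<in>{1..3::nat}. \<Sum>q\<in>{1..2::nat}. y (i(v := p, b := q))) = 0"
    using S0 bv by simp
  define r where "r = parity (W0 - {b}) i"
  have sgp: "\<And>p q. parity W0 (i(v := p, b := q)) = level_sign q * r" unfolding r_def using parity_W0_update_v[OF b] by simp
  have "(\<Sum>p\<in>{1..3::nat}. parity W0 (i(v := p, b := 1)) * y (i(v := p, b := 1))) -
        (\<Sum>p\<in>{1..3::nat}. parity W0 (i(v := p, b := 2)) * y (i(v := p, b := 2))) =
        r * (\<Sum>p\<in>{1..3::nat}. \<Sum>q\<in>{1..2::nat}. y (i(v := p, b := q)))"
    unfolding sum_1_to_2 sum_1_to_3 sgp level_sign_simps by (simp add: algebra_simps)
  thus ?thesis using S by simp
qed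

definition twisted3 :: "(('a \<Rightarrow> nat) \<Rightarrow> int) \<Rightarrow> nat \<Rightarrow> ('a \<Rightarrow> nat) \<Rightarrow> ('a \<Rightarrow> nat) \<Rightarrow> int" where
  "twisted3 y k \<alpha> \<beta> = parity W0 (level_col k \<alpha> \<beta>) * y (level_col k \<alpha> \<beta>)"

lemma twisted3_rectangle:
  assumes ky: "A_kernel (A \<union> B) (Dmn A B) d3 y" and k: "k \<in> {1..3}"
    and a: "\<alpha> \<in> cols_A A' d2" "\<alpha>' \<in> cols_A A' d2" and b: "\<beta> \<in> cols_A B d2" "\<beta>' \<in> cols_A B d2"
  shows "twisted3 y k \<alpha> \<beta> + twisted3 y k \<alpha>' \<beta>' = twisted3 y k \<alpha>' \<beta> + twisted3 y k \<alpha> \<beta>'"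
proof -
  have squares: "\<forall>i\<in>K3. \<forall>a\<in>A'. \<forall>b\<in>B. alt_square (\<lambda>i. parity W0 i * y i) i a b = 0"
    using three_levels_alt_square[OF ky] by blast
  have "(\<lambda>i. parity W0 i * y i) (level_col k \<alpha> \<beta>) + (\<lambda>i. parity W0 i * y i) (level_col k \<alpha>' \<beta>') =
      (\<lambda>i. parity W0 i * y i) (glue A' (level_col k \<alpha>' \<beta>') (level_col k \<alpha> \<beta>)) +
      (\<lambda>i. parity W0 i * y i) (glue B (level_col k \<alpha>' \<beta>') (level_col k \<alpha> \<beta>))"
  proof (rule rectangle_rule[OF finite_AB _ _ _ _ squares level_col_in_cols[OF k a(1) b(1)] level_col_in_cols[OF k a(2) b(2)]])
    show "A' \<inter> B = {}" "\<forall>u\<in>A' \<union> B. d3 u = 2" using disjoint v_notin_B by auto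
    show "\<forall>u\<in>A \<union> B - (A' \<union> B). level_col k \<alpha> \<beta> u = level_col k \<alpha>' \<beta>' u" unfolding level_col_def by auto
  qed auto
  then show ?thesis unfolding twisted3_def glue_level_col_A' glue_level_col_B[OF b] by simp
qed

lemma twisted3_level_sum:
  assumes ky: "A_kernel (A \<union> B) (Dmn A B) d3 y"
    and a: "\<alpha> \<in> cols_A A' d2" and b: "\<beta> \<in> cols_A B d2" "\<beta>' \<in> cols_A B d2"
  shows "twisted3 y 1 \<alpha> \<beta> + twisted3 y 2 \<alpha> \<beta> + twisted3 y 3 \<alpha> \<beta> = twisted3 y 1 \<alpha> \<beta>' + twisted3 y 2 \<alpha> \<beta>' + twisted3 y 3 \<alpha> \<beta>'"
proof -
  define T where "T = (\<lambda>i. \<Sum>p\<in>{1..3::nat}. parity W0 (i(v := p)) * y (i(v := p)))"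
  have flip: "\<forall>i\<in>K3. \<forall>b\<in>B. T (i(b := 1)) = T (i(b := 2))"
  proof (intro ballI)
    fix i b assume "i \<in> K3" "b \<in> B"
    moreover have "i(b := q, v := p) = i(v := p, b := q)" for p q using \<open>b \<in> B\<close> v_notin_B by (auto simp: fun_upd_twist)
    ultimately show "T (i(b := 1)) = T (i(b := 2))" unfolding T_def using three_levels_v_sum[OF ky] by simp
  qed
  have k1: "(1::nat) \<in> {1..3}" by simp
  have "T (level_col 1 \<alpha> \<beta>) = T (glue B (level_col 1 \<alpha> \<beta>') (level_col 1 \<alpha> \<beta>))"
    by (rule invariant_under_glue[OF finite_B _ _ flip level_col_in_cols[OF k1 a b(1)] level_col_in_cols[OF k1 a b(2)]])
      (use v_notin_B in auto)
  then show ?thesis unfolding glue_level_col_B[OF b] T_def level_col_update_v sum_1_to_3 twisted3_def .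
qed

lemma twisted3_level_additive_vec:
  assumes "k \<in> {1..3}" "\<alpha> \<in> cols_A A' d2" "\<beta> \<in> cols_A B d2"
  shows "twisted3 (level_additive_vec H G) k \<alpha> \<beta> = H k \<alpha> + G k \<beta>"
  using level_col_in_cols[OF assms] level_col_v restrict_level_col_A'[OF assms(2)] restrict_level_col_B[OF assms(3)]
  unfolding level_additive_vec_def twisted3_def by (simp add: mult.assoc[symmetric] parity_sq)

lemma ternary_rectangle_system_twisted3:
  assumes \<alpha>: "\<alpha>0 \<in> cols_A A' d2" "\<alpha>1 \<in> cols_A A' d2" "\<alpha>1 \<noteq> \<alpha>0"
    and \<beta>: "p0 \<in> cols_A B d2" "p1 \<in> cols_A B d2" "q \<in> cols_A B d2" "r \<in> cols_A B d2"
    and \<beta>d: "p0 \<noteq> p1" "p0 \<noteq> q" "p0 \<noteq> r" "p1 \<noteq> q" "p1 \<noteq> r" "q \<noteq> r"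
    and y: "pm1_refinement (A \<union> B) (Dmn A B) d3 y (level_additive_vec (ternary_H \<alpha>0) (ternary_G p1 q r))"
  shows "ternary_rectangle_system (twisted3 y) (cols_A A' d2) (cols_A B d2) \<alpha>0 \<alpha>1 p0 p1 q r"
proof
  have ky: "A_kernel (A \<union> B) (Dmn A B) d3 y" using y by blast
  show "twisted3 y k \<alpha> \<beta> + twisted3 y k \<alpha>' \<beta>' = twisted3 y k \<alpha>' \<beta> + twisted3 y k \<alpha> \<beta>'"
    if "k \<in> {1..3}" "\<alpha> \<in> cols_A A' d2" "\<beta> \<in> cols_A B d2" "\<alpha>' \<in> cols_A A' d2" "\<beta>' \<in> cols_A B d2"
    for k \<alpha> \<beta> \<alpha>' \<beta>'
    using twisted3_rectangle[OF ky that(1,2,4,3,5)] .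
  show "twisted3 y 1 \<alpha> \<beta> + twisted3 y 2 \<alpha> \<beta> + twisted3 y 3 \<alpha> \<beta> =
      twisted3 y 1 \<alpha> \<beta>' + twisted3 y 2 \<alpha> \<beta>' + twisted3 y 3 \<alpha> \<beta>'"
    if "\<alpha> \<in> cols_A A' d2" "\<beta> \<in> cols_A B d2" "\<beta>' \<in> cols_A B d2" for \<alpha> \<beta> \<beta>'
    using twisted3_level_sum[OF ky that] .
  show "twisted3 y k \<alpha> \<beta> = 0" if "k \<in> {1..3}" "\<alpha> \<in> cols_A A' d2" "\<beta> \<in> cols_A B d2"
    "ternary_H \<alpha>0 k \<alpha> + ternary_G p1 q r k \<beta> = 0" for k \<alpha> \<beta>
  proof -
    have "level_additive_vec (ternary_H \<alpha>0) (ternary_G p1 q r) (level_col k \<alpha> \<beta>) = 0"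
      using twisted3_level_additive_vec[where H = "ternary_H \<alpha>0" and G = "ternary_G p1 q r", OF that(1-3)] that(4)
      unfolding twisted3_def by (simp add: parity_nonzero)
    then have "y (level_col k \<alpha> \<beta>) = 0" using y by blast
    then show ?thesis unfolding twisted3_def by simp
  qed
  show "twisted3 y 3 \<alpha>0 p1 \<in> {-1,0,1}"
    using parity_pm1[of W0 "level_col 3 \<alpha>0 p1"] y unfolding twisted3_def by auto
qed (fact \<alpha> \<beta> \<beta>d)+

lemma not_A_pm1_refinable_three_levels:
  assumes cA: "card A \<ge> 2" and cB: "card B \<ge> 2"
  shows "\<not> A_pm1_refinable (A \<union> B) (Dmn A B) d3"
proof
  assume P: "A_pm1_refinable (A \<union> B) (Dmn A B) d3"
  obtain a1 a2 where "a1 \<in> A" "a2 \<in> A" "a1 \<noteq> a2" using two_elements[OF finite_A cA] by blast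
  then obtain a0 where a0: "a0 \<in> A'" by (cases "a1 = v") auto
  define \<alpha>0 where "\<alpha>0 = restrict (\<lambda>_. 1::nat) A'"
  define \<alpha>1 where "\<alpha>1 = \<alpha>0(a0 := 2)"
  have \<alpha>: "\<alpha>0 \<in> cols_A A' d2" "\<alpha>1 \<in> cols_A A' d2" "\<alpha>1 \<noteq> \<alpha>0"
    unfolding \<alpha>1_def \<alpha>0_def cols_A_def using a0 by (auto simp: fun_eq_iff PiE_def extensional_def dest: fun_cong[of _ _ a0])
  obtain b1 b2 where "b1 \<in> B" "b2 \<in> B" "b1 \<noteq> b2" using two_elements[OF finite_B cB] by blast
  then obtain p0 p1 q r where \<beta>: "p0 \<in> cols_A B d2" "p1 \<in> cols_A B d2" "q \<in> cols_A B d2" "r \<in> cols_A B d2"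
    and \<beta>d: "p0 \<noteq> p1" "p0 \<noteq> q" "p0 \<noteq> r" "p1 \<noteq> q" "p1 \<noteq> r" "q \<noteq> r" by (rule distinct_cols_two_levels)
  define z where "z = level_additive_vec (ternary_H \<alpha>0) (ternary_G p1 q r)"
  have "twisted3 z 3 \<alpha>0 p1 \<noteq> 0"
    using twisted3_level_additive_vec[where H = "ternary_H \<alpha>0" and G = "ternary_G p1 q r", OF _ \<alpha>(1) \<beta>(2)] \<beta>d
    unfolding z_def by (simp add: ternary_H_def ternary_G_def)
  then have "z (level_col 3 \<alpha>0 p1) \<noteq> 0" unfolding twisted3_def by simp
  then obtain y where y: "pm1_refinement (A \<union> B) (Dmn A B) d3 y z"
    using A_pm1_refinableD[OF P A_kernel_level_additive_vec[where H = "ternary_H \<alpha>0" and G = "ternary_G p1 q r", OF ternary_G_level_sum]]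
    unfolding z_def by blast
  interpret ternary_rectangle_system "twisted3 y" "cols_A A' d2" "cols_A B d2" \<alpha>0 \<alpha>1 p0 p1 q r
    using ternary_rectangle_system_twisted3[OF \<alpha> \<beta> \<beta>d] y unfolding z_def by blast
  have "y i = 0" for i
  proof (cases "i \<in> K3")
    case True
    then have "twisted3 y (i v) (restrict i A') (restrict i B) = 0" using level_col_parts vanishes by blast
    then show ?thesis using level_col_parts(4)[OF True] unfolding twisted3_def by (simp add: parity_nonzero)
  qed (use A_kernel_outside y in blast)
  then show False using y by simp
qed

end

lemma not_A_pm1_refinable_Dmn_three_levels:
  assumes AB: "A \<inter> B = {}" and fin: "finite A" "finite B" and card: "card A \<ge> 2" "card B \<ge> 2"
    and v: "v \<in> A \<union> B"
  shows "\<not> A_pm1_refinable (A \<union> B) (Dmn A B) (\<lambda>u. if u = v then 3 else 2)"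
proof (cases "v \<in> A")
  case True
  interpret Dmn_three_levels A B v by unfold_locales (use AB fin True in auto)
  show ?thesis using not_A_pm1_refinable_three_levels[OF card] .
next
  case False
  interpret Dmn_three_levels B A v by unfold_locales (use AB fin v False in auto)
  show ?thesis using not_A_pm1_refinable_three_levels[OF card(2,1)] by (simp add: Dmn_sym Un_commute)
qed

text \<open>Reducing one level \<open>d v \<ge> 3\<close> to three and all others to two shows that \<open>d = 2\<close> is necessary.\<close>
lemma Dmn_base_case:
  assumes AB: "A \<inter> B = {}" and fin: "finite A" "finite B" and card: "card A \<ge> 2" "card B \<ge> 2"
    and d2: "\<forall>v\<in>A \<union> B. d v \<ge> 2"
  shows "(A_pm1_refinable (A \<union> B) (Dmn A B) d \<longleftrightarrow> (\<forall>v\<in>A \<union> B. d v = 2)) \<and> rigid_pair (A \<union> B) (Dmn A B) d"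
proof (intro conjI iffI)
  interpret Dmn_two_levels A B by unfold_locales (use AB fin in auto)
  interpret fewer_levels "A \<union> B" "Dmn A B" d "\<lambda>_. 2"
    by unfold_locales (use finite_AB Dmn_subset_Pow d2 in auto)
  show "rigid_pair (A \<union> B) (Dmn A B) d" using rigid_pair_more_levels rigid_pair_two_levels[OF card] by blast
  show "A_pm1_refinable (A \<union> B) (Dmn A B) d" if "\<forall>v\<in>A \<union> B. d v = 2"
    using A_pm1_refinable_two_levels A_pm1_refinable_cong_levels[OF _ Dmn_subset_Pow, of d d2] that by simp
  show "\<forall>v\<in>A \<union> B. d v = 2" if P: "A_pm1_refinable (A \<union> B) (Dmn A B) d"
  proof (rule ccontr)
    assume "\<not> (\<forall>v\<in>A \<union> B. d v = 2)"
    then obtain v where v: "v \<in> A \<union> B" "d v \<ge> 3" using d2 by force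
    interpret three: fewer_levels "A \<union> B" "Dmn A B" d "\<lambda>u. if u = v then 3 else 2"
      by unfold_locales (use finite_AB Dmn_subset_Pow d2 v in auto)
    show False using three.A_pm1_refinable_fewer_levels[OF P] not_A_pm1_refinable_Dmn_three_levels[OF AB fin card v(1)]
      by blast
  qed
qed

lemma obtained_complex_on: "obtained m n V C W L \<Longrightarrow> finite V \<and> C \<subseteq> Pow V"
proof (induction rule: obtained.induct)
  case (base A B) then show ?case unfolding Dmn_char[OF base(3)] by auto
next
  case (cone V C W L U) then show ?case unfolding cone_cx_def by auto
next
  case (lawrence V C W L u) then show ?case unfolding lawrence_cx_def by auto
qed auto

definition single_col :: "'a \<Rightarrow> nat \<Rightarrow> ('a \<Rightarrow> nat)" where
  "single_col u k = (\<lambda>x. if x = u then k else undefined)"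

lemma single_col_in_cols_A: "k \<in> {1..d u} \<Longrightarrow> single_col u k \<in> cols_A {u} d"
  unfolding single_col_def cols_A_def by (auto simp: PiE_def extensional_def)

lemma single_col_inj: "single_col u k = single_col u k' \<longleftrightarrow> k = k'"
  unfolding single_col_def by (metis (full_types))

lemma cols_A_singleton: "cols_A {u} d = single_col u ` {1..d u}"
  unfolding single_col_def cols_A_def by (auto simp: PiE_def extensional_def fun_eq_iff image_iff)

lemma lawrence_step:
  assumes fV: "finite V" and CV: "C \<subseteq> Pow V" and u: "u \<notin> V" and du: "d u \<ge> 2"
    and IH: "A_pm1_refinable V C d \<longleftrightarrow> Q" "rigid_pair V C d"
  shows "(A_pm1_refinable (insert u V) (lawrence_cx V u C) d \<longleftrightarrow> Q \<and> d u = 2) \<and>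
    rigid_pair (insert u V) (lawrence_cx V u C) d"
proof -
  interpret vertex_split V "{u}" d by unfold_locales (use fV u in auto)
  have t: "single_col u 1 \<in> cols_A {u} d" "single_col u 2 \<in> cols_A {u} d" "single_col u 1 \<noteq> single_col u 2"
    using du by (auto intro: single_col_in_cols_A simp: single_col_inj)
  have "A_pm1_refinable (V \<union> {u}) (lawrence_cx V u C) d \<longleftrightarrow> Q \<and> d u = 2"
  proof
    assume P': "A_pm1_refinable (V \<union> {u}) (lawrence_cx V u C) d"
    have "d u = 2"
    proof (rule ccontr)
      assume "d u \<noteq> 2"
      then have "single_col u 3 \<in> cols_A {u} d" "single_col u 1 \<noteq> single_col u 3" "single_col u 2 \<noteq> single_col u 3"
        using du by (auto intro: single_col_in_cols_A simp: single_col_inj)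
      then show False using not_A_pm1_refinable_lawrence[OF CV refl t(1,2) _ t(3)] IH(2) P' by blast
    qed
    then show "Q \<and> d u = 2" using A_pm1_refinable_of_lawrence[OF CV refl t P'] IH(1) by blast
  next
    assume "Q \<and> d u = 2"
    moreover have "cols_A {u} d = {single_col u 1, single_col u 2}" if "d u = 2"
      unfolding cols_A_singleton that by (auto simp: numeral_2_eq_2 atLeastAtMostSuc_conv)
    ultimately show "A_pm1_refinable (V \<union> {u}) (lawrence_cx V u C) d"
      using A_pm1_refinable_lawrence_two_levels[OF CV refl _ t(3)] IH(1) by blast
  qed
  then show ?thesis using rigid_pair_lawrence[OF CV refl t IH(2)] by simp
qed

lemma obtained_pm1_refinable_iff:
  assumes "obtained m n V C W L" "m \<ge> 1" "n \<ge> 1" "\<forall>v\<in>V. d v \<ge> 2"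
  shows "(A_pm1_refinable V C d \<longleftrightarrow> (\<forall>v\<in>W. d v = 2) \<and> (\<forall>v\<in>L. d v = 2)) \<and> rigid_pair V C d"
  using assms
proof (induction rule: obtained.induct)
  case (base A B)
  then show ?case using Dmn_base_case[OF base(3,1,2)] by simp
next
  case (cone V C W L U)
  interpret vertex_split V U d by unfold_locales (use obtained_complex_on[OF cone(1)] cone in auto)
  have "cols_A U d \<noteq> {}" using cols_A_nonempty[of U d] cone(8) by force
  then show ?case
    using A_pm1_refinable_cone_iff rigid_pair_cone obtained_complex_on[OF cone(1)] cone by simp
next
  case (ghost V C W L u)
  interpret vertex_split V "{u}" d by unfold_locales (use obtained_complex_on[OF ghost(1)] ghost in auto)
  have "cols_A {u} d \<noteq> {}" using cols_A_nonempty[of "{u}" d] ghost(6) by force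
  then show ?case
    using A_pm1_refinable_ghost_iff rigid_pair_ghost obtained_complex_on[OF ghost(1)] ghost by simp
next
  case (lawrence V C W L u)
  have IH: "A_pm1_refinable V C d \<longleftrightarrow> (\<forall>v\<in>W. d v = 2) \<and> (\<forall>v\<in>L. d v = 2)" "rigid_pair V C d"
    using lawrence by simp_all
  have "finite V" "C \<subseteq> Pow V" using obtained_complex_on[OF lawrence(1)] by simp_all
  moreover have "d u \<ge> 2" using lawrence(6) by simp
  ultimately show ?case using lawrence_step[OF _ _ lawrence(2) _ IH] by auto
qed

theorem theorem7p10:
  fixes m n :: nat and V W L :: "'a set" and C :: "'a set set" and d :: "'a \<Rightarrow> nat"
  assumes "m \<ge> 1" and "n \<ge> 1"
    and "obtained m n V C W L"
    and "\<forall>v\<in>V. d v \<ge> 2"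
  shows "A_unimodular V C d \<longleftrightarrow> (\<forall>v\<in>W. d v = 2) \<and> (\<forall>v\<in>L. d v = 2)"
proof -
  have "finite V" "C \<subseteq> Pow V" using obtained_complex_on[OF assms(3)] by simp_all
  then have "A_unimodular V C d \<longleftrightarrow> A_pm1_refinable V C d" by (rule A_unimodular_iff_pm1_refinable)
  then show ?thesis using obtained_pm1_refinable_iff[OF assms(3,1,2,4)] by simp
qed

end
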